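(* Let $K=1$, $P=0$, and suppose $(\alpha,\mu)$ satisfies the Data Assumption. Fix $\tau>0$ and define $\alpha^\circ\in\mathbb{D}^\uparrow_{\mathcal M}$ by $\alpha^\circ_t(A)=\alpha_t(A\cap[0,\tau])$ for all Borel $A\subset\mathbb{R}_+$ and $t\ge0$. Let $(\xi^\circ,\beta^\circ,\iota^\circ,\rho^\circ)$ and $(\xi,\beta,\iota,\rho)$ be the unique solutions of the (single-server) hard EDF fluid model equations corresponding to $(\alpha^\circ,\mu)$ and $(\alpha,\mu)$, respectively. Then for all $x,t\in[0,\tau]$: $\rho(t)=\rho^\circ(t)$, $\beta^r_t[0,x]=\beta^{\circ,r}_t[0,x]$, $\beta^s_t[0,x]=\beta^{\circ,s}_t[0,x]$, and $\xi_t[0,x]=\xi^\circ_t[0,x]$.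
   Context: $\mathcal M$ = finite Borel measures on $\mathbb{R}_+$; $\mathcal M_\sim$ atomless ones; $\mathbb{D}^\uparrow_{\mathcal M}$ = càdlàg $\mathcal M$-valued paths with $t\mapsto\int fd\zeta_t$ nondecreasing for all continuous bounded nonnegative $f$; $\mathbb{C}^\uparrow_{\mathcal M_\sim}$ its continuous $\mathcal M_\sim$-valued elements. Data Assumption (with $K=1$): (1) $\alpha_t(B)=\xi_{0-}(B)+\hat\alpha_t(B)$, $\xi_{0-}\in\mathcal M_\sim$, $\hat\alpha\in\mathbb{C}^\uparrow_{\mathcal M_\sim}$ with $\hat\alpha_t(B)=\int_0^ta_s(B)ds$, each $a_t$ a finite measure on $[t,\infty)$, $t\mapsto a_t(B)$ measurable, $\lim_{\delta\downarrow0}\sup_{s\in[0,t]}a_s[s,s+\delta]=0$ for all $t$. (2) $\mu(t)=\int_0^tm(s)ds$ with $m\ge0$ Borel and $\inf_{s\in[0,t]}m(s)>0$ for every $t$. Single-server hard EDF fluid model equations for data $(\alpha,\mu)$ (unknowns $\xi\in\mathbb{D}_{\mathcal M}$; $\beta,\beta^s,\beta^r\in\mathbb{D}^\uparrow_{\mathcal M}$; $\rho,\iota$ nonnegative nondecreasing càdlàg): for all $t,x\ge0$: $\beta=\beta^s+\beta^r$; $\iota(t)=\mu(t)-\beta^s_t[0,\infty)$; $\beta^r_t(t,\infty)=0$; $\xi_t[0,x]=\alpha_t[0,x]-\beta_t[0,x]$; $\int\xi_t[0,x]d\iota(t)=0$; $\int\xi_t[0,x]d\beta_t(x,\infty)=0$;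 $\rho(t)=\beta^r_t[0,t]=\beta^r_t[0,\infty)$; $\xi_t[0,t)=0$; $\int1\{\sigma(t)>t\}d\rho(t)=0$ where $\sigma(t)=\inf\operatorname{supp}\xi_t$. *)

theory Defs
  imports "HOL-Analysis.Analysis"
begin

section \<open>Finite Borel measures on R+ (represented as Borel measures on real vanishing on negatives)\<close>

definition fin_meas :: "real measure \<Rightarrow> bool" where
  "fin_meas M \<longleftrightarrow> sets M = sets borel \<and> emeasure M UNIV < \<infinity> \<and> emeasure M {..<0} = 0"

definition atomless_meas :: "real measure \<Rightarrow> bool" where
  "atomless_meas M \<longleftrightarrow> fin_meas M \<and> (\<forall>x. emeasure M {x} = 0)"

definition bcont :: "(real \<Rightarrow> real) \<Rightarrow> bool" where
  "bcont f \<longleftrightarrow> continuous_on UNIV f \<and> bounded (range f)"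

definition weak_tendsto :: "(real \<Rightarrow> real measure) \<Rightarrow> real measure \<Rightarrow> real filter \<Rightarrow> bool" where
  "weak_tendsto \<zeta> \<nu> F \<longleftrightarrow>
     (\<forall>f. bcont f \<longrightarrow> ((\<lambda>t. integral\<^sup>L (\<zeta> t) f) \<longlongrightarrow> integral\<^sup>L \<nu> f) F)"

definition cadlag_M :: "(real \<Rightarrow> real measure) \<Rightarrow> bool" where
  "cadlag_M \<zeta> \<longleftrightarrow> (\<forall>t\<ge>0. fin_meas (\<zeta> t))
     \<and> (\<forall>t\<ge>0. weak_tendsto \<zeta> (\<zeta> t) (at_right t))
     \<and> (\<forall>t>0. \<exists>\<nu>. fin_meas \<nu> \<and> weak_tendsto \<zeta> \<nu> (at_left t))"

definition cadlag_M_up :: "(real \<Rightarrow> real measure) \<Rightarrow> bool" where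
  "cadlag_M_up \<zeta> \<longleftrightarrow> cadlag_M \<zeta> \<and>
     (\<forall>f. bcont f \<and> (\<forall>x. f x \<ge> 0) \<longrightarrow> mono_on {0..} (\<lambda>t. integral\<^sup>L (\<zeta> t) f))"

definition cont_M_atomless_up :: "(real \<Rightarrow> real measure) \<Rightarrow> bool" where
  "cont_M_atomless_up \<zeta> \<longleftrightarrow> cadlag_M_up \<zeta> \<and> (\<forall>t\<ge>0. atomless_meas (\<zeta> t))
     \<and> (\<forall>t\<ge>0. weak_tendsto \<zeta> (\<zeta> t) (at t within {0..}))"

definition cadlag_fun :: "(real \<Rightarrow> real) \<Rightarrow> bool" where
  "cadlag_fun f \<longleftrightarrow> (\<forall>t\<ge>0. continuous (at_right t) f) \<and> (\<forall>t>0. \<exists>l. (f \<longlongrightarrow> l) (at_left t))"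

definition nonneg_nondec_cadlag :: "(real \<Rightarrow> real) \<Rightarrow> bool" where
  "nonneg_nondec_cadlag f \<longleftrightarrow> cadlag_fun f \<and> mono_on {0..} f \<and> (\<forall>t\<ge>0. f t \<ge> 0)"

text \<open>Lebesgue--Stieltjes measure df on [0,infinity) of a nondecreasing right-continuous f,
  with the convention f(0-) = 0 (so df has an atom f(0) at 0).\<close>
definition stieltjes :: "(real \<Rightarrow> real) \<Rightarrow> real measure" where
  "stieltjes f = interval_measure (\<lambda>t. if t < 0 then 0 else f t)"

text \<open>Support of a measure and sigma(t) = inf supp (inf of empty set = infinity)\<close>
definition supp_meas :: "real measure \<Rightarrow> real set" where
  "supp_meas M = {x. \<forall>e>0. emeasure M {x - e<..<x + e} \<noteq> 0}"

definition inf_supp :: "real measure \<Rightarrow> ereal" where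
  "inf_supp M = Inf (ereal ` supp_meas M)"

definition data_assumption :: "(real \<Rightarrow> real measure) \<Rightarrow> (real \<Rightarrow> real) \<Rightarrow> bool" where
  "data_assumption \<alpha> \<mu> \<longleftrightarrow>
    (\<exists>\<xi>0 \<alpha>h a.
       atomless_meas \<xi>0 \<and> cont_M_atomless_up \<alpha>h
     \<and> (\<forall>t\<ge>0. sets (\<alpha> t) = sets borel)
     \<and> (\<forall>t\<ge>0. \<forall>B\<in>sets borel. emeasure (\<alpha> t) B = emeasure \<xi>0 B + emeasure (\<alpha>h t) B)
     \<and> (\<forall>t\<ge>0. \<forall>B\<in>sets borel. emeasure (\<alpha>h t) B = (\<integral>\<^sup>+ s\<in>{0..t}. emeasure (a s) B \<partial>lborel))
     \<and> (\<forall>t\<ge>0. fin_meas (a t) \<and> emeasure (a t) {..<t} = 0)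
     \<and> (\<forall>B\<in>sets borel. (\<lambda>s. emeasure (a s) B) \<in> borel_measurable (restrict_space borel {0..}))
     \<and> (\<forall>t\<ge>0. ((\<lambda>\<delta>. SUP s\<in>{0..t}. emeasure (a s) {s..s+\<delta>}) \<longlongrightarrow> 0) (at_right 0)))
  \<and> (\<exists>m::real \<Rightarrow> real. m \<in> borel_measurable borel \<and> (\<forall>s\<ge>0. m s \<ge> 0)
     \<and> (\<forall>t\<ge>0. \<exists>c>0. \<forall>s\<in>{0..t}. m s \<ge> c)
     \<and> (\<forall>t\<ge>0. ennreal (\<mu> t) = (\<integral>\<^sup>+ s\<in>{0..t}. ennreal (m s) \<partial>lborel)))"

definition hard_EDF_FME ::
  "(real \<Rightarrow> real measure) \<Rightarrow> (real \<Rightarrow> real) \<Rightarrow>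
   (real \<Rightarrow> real measure) \<Rightarrow> (real \<Rightarrow> real measure) \<Rightarrow> (real \<Rightarrow> real measure) \<Rightarrow>
   (real \<Rightarrow> real measure) \<Rightarrow> (real \<Rightarrow> real) \<Rightarrow> (real \<Rightarrow> real) \<Rightarrow> bool" where
  "hard_EDF_FME \<alpha> \<mu> \<xi> \<beta> \<beta>s \<beta>r \<rho> \<iota> \<longleftrightarrow>
     cadlag_M \<xi> \<and> cadlag_M_up \<beta> \<and> cadlag_M_up \<beta>s \<and> cadlag_M_up \<beta>r
   \<and> nonneg_nondec_cadlag \<rho> \<and> nonneg_nondec_cadlag \<iota>
   \<and> (\<forall>t\<ge>0. \<forall>B\<in>sets borel. emeasure (\<beta> t) B = emeasure (\<beta>s t) B + emeasure (\<beta>r t) B)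
   \<and> (\<forall>t\<ge>0. \<iota> t = \<mu> t - measure (\<beta>s t) {0..})
   \<and> (\<forall>t\<ge>0. emeasure (\<beta>r t) {t<..} = 0)
   \<and> (\<forall>t\<ge>0. \<forall>x\<ge>0. measure (\<xi> t) {0..x} = measure (\<alpha> t) {0..x} - measure (\<beta> t) {0..x})
   \<and> (\<forall>x\<ge>0. (\<integral>\<^sup>+ t\<in>{0..}. ennreal (measure (\<xi> t) {0..x}) \<partial>stieltjes \<iota>) = 0)
   \<and> (\<forall>x\<ge>0. (\<integral>\<^sup>+ t\<in>{0..}. ennreal (measure (\<xi> t) {0..x})
                 \<partial>stieltjes (\<lambda>s. measure (\<beta> s) {x<..})) = 0)
   \<and> (\<forall>t\<ge>0. \<rho> t = measure (\<beta>r t) {0..t} \<and> \<rho> t = measure (\<beta>r t) {0..})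
   \<and> (\<forall>t\<ge>0. emeasure (\<xi> t) {0..<t} = 0)
   \<and> (\<integral>\<^sup>+ t\<in>{0..}. (if inf_supp (\<xi> t) > ereal t then 1 else 0) \<partial>stieltjes \<rho>) = 0"

definition unique_hard_EDF_solution ::
  "(real \<Rightarrow> real measure) \<Rightarrow> (real \<Rightarrow> real) \<Rightarrow>
   (real \<Rightarrow> real measure) \<Rightarrow> (real \<Rightarrow> real measure) \<Rightarrow> (real \<Rightarrow> real measure) \<Rightarrow>
   (real \<Rightarrow> real measure) \<Rightarrow> (real \<Rightarrow> real) \<Rightarrow> (real \<Rightarrow> real) \<Rightarrow> bool" where
  "unique_hard_EDF_solution \<alpha> \<mu> \<xi> \<beta> \<beta>s \<beta>r \<rho> \<iota> \<longleftrightarrow>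
     hard_EDF_FME \<alpha> \<mu> \<xi> \<beta> \<beta>s \<beta>r \<rho> \<iota>
   \<and> (\<forall>\<xi>' \<beta>' \<beta>s' \<beta>r' \<rho>' \<iota>'. hard_EDF_FME \<alpha> \<mu> \<xi>' \<beta>' \<beta>s' \<beta>r' \<rho>' \<iota>' \<longrightarrow>
        (\<forall>t\<ge>0. \<xi>' t = \<xi> t \<and> \<beta>' t = \<beta> t \<and> \<beta>s' t = \<beta>s t \<and> \<beta>r' t = \<beta>r t
               \<and> \<rho>' t = \<rho> t \<and> \<iota>' t = \<iota> t))"

definition truncate_data :: "(real \<Rightarrow> real measure) \<Rightarrow> real \<Rightarrow> (real \<Rightarrow> real measure)" where
  "truncate_data \<alpha> \<tau> = (\<lambda>t. density (\<alpha> t) (indicator {0..\<tau>}))"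

end

theory Submission
  imports Defs
begin

text \<open>
  Stop the solution for \<open>\<alpha>\<close> at time \<open>\<tau>\<close> and discard all deadlines beyond \<open>\<tau>\<close>: restrict
  \<open>\<xi>\<^bsub>t \<and> \<tau>\<^esub>\<close>, \<open>\<beta>\<^bsub>t \<and> \<tau>\<^esub>\<close>, \<open>\<beta>\<^sup>s\<^bsub>t \<and> \<tau>\<^esub>\<close> to \<open>[0, \<tau>]\<close>, keep \<open>\<beta>\<^sup>r\<^bsub>t \<and> \<tau>\<^esub>\<close> and \<open>\<rho>(t \<and> \<tau>)\<close>, and let \<open>\<mu>\<close>
  determine the idleness. This tuple satisfies the fluid model equations for the truncated data
  \<open>\<alpha>\<^sup>\<circ>\<close>, so by uniqueness it is the solution for \<open>\<alpha>\<^sup>\<circ>\<close>, and for \<open>x, t \<le> \<tau>\<close> it visibly agrees with the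
  solution for \<open>\<alpha>\<close>.

  No work with deadline \<open>\<le> \<tau>\<close> arrives after time \<open>\<tau>\<close>
  (\<open>a\<^sub>s\<close> lives on \<open>[s, \<infinity>)\<close>), so stopping is compatible with \<open>\<alpha>\<^sup>\<circ>\<close>. The queue \<open>\<xi>\<^sub>\<tau>\<close> holds no work
  with deadline \<open>\<le> \<tau>\<close>, so the stopped queue is empty from \<open>\<tau>\<close> on. And \<open>\<rho>\<close> has no atom at \<open>\<tau>\<close>,
  so the stopped reneging process never charges a time at which the queue is empty. The
  non-idling and EDF conditions then reduce to those of the original solution, since on
  \<open>[0, \<tau>]\<close> the extra idleness is service of deadlines beyond \<open>\<tau>\<close>.
\<close>

section \<open>Lebesgue--Stieltjes measures\<close>

definition ext_zero :: "(real \<Rightarrow> real) \<Rightarrow> real \<Rightarrow> real" where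
  "ext_zero f = (\<lambda>t. if t < 0 then 0 else f t)"

lemma stieltjes_eq_interval_measure: "stieltjes f = interval_measure (ext_zero f)"
  by (simp add: stieltjes_def ext_zero_def)

lemma sets_stieltjes [simp]: "sets (stieltjes f) = sets borel"
  by (simp add: stieltjes_def)

lemma Int_stable_Ioc: "Int_stable (range (\<lambda>(a, b). {a<..b::real}))"
proof (rule Int_stableI)
  fix A B assume "A \<in> range (\<lambda>(a, b). {a<..b::real})" "B \<in> range (\<lambda>(a, b). {a<..b::real})"
  then obtain a b c d where "A = {a<..b}" "B = {c<..d}" by auto
  then have "A \<inter> B = {max a c<..min b d}" by auto
  then show "A \<inter> B \<in> range (\<lambda>(a, b). {a<..b::real})" by (auto intro!: image_eqI[where x="(max a c, min b d)"])
qed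

lemma sets_borel_eq_sigma_Ioc: "sets borel = sigma_sets UNIV (range (\<lambda>(a, b). {a<..b::real}))"
  by (subst borel_sigma_sets_Ioc) (simp add: sets_measure_of)

lemma UN_Ioc_eq_UNIV: "(\<Union>i::nat. {- real i<..real i}) = UNIV"
proof -
  have "x \<in> (\<Union>i::nat. {- real i<..real i})" for x :: real
  proof -
    obtain n :: nat where "\<bar>x\<bar> < real n" using reals_Archimedean2 by blast
    then have "x \<in> {- real n<..real n}" by auto
    then show ?thesis by blast
  qed
  then show ?thesis by auto
qed

lemma emeasure_interval_measure_eq_below:
  fixes F G :: "real \<Rightarrow> real"
  assumes mF: "\<And>x y. x \<le> y \<Longrightarrow> F x \<le> F y" and rF: "\<And>a. continuous (at_right a) F"
    and mG: "\<And>x y. x \<le> y \<Longrightarrow> G x \<le> G y" and rG: "\<And>a. continuous (at_right a) G"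
    and eq: "\<And>x. x \<le> c \<Longrightarrow> F x = G x"
    and A: "A \<in> sets borel" "A \<subseteq> {..c}"
  shows "emeasure (interval_measure F) A = emeasure (interval_measure G) A"
proof -
  let ?E = "range (\<lambda>(a, b). {a<..b::real})"
  let ?D = "\<lambda>H. density (interval_measure H) (indicator {..c})"
  have em: "emeasure (?D H) {a<..b} = (if a \<le> min b c then ennreal (H (min b c) - H a) else 0)"
    if "\<And>x y. x \<le> y \<Longrightarrow> H x \<le> H y" "\<And>a. continuous (at_right a) H" for H a b
  proof -
    have "emeasure (?D H) {a<..b} = emeasure (interval_measure H) ({..c} \<inter> {a<..b})"
      by (rule emeasure_restricted) auto
    also have "{..c} \<inter> {a<..b} = {a<..min b c}" by auto
    finally show ?thesis using emeasure_interval_measure_Ioc_eq[of H a "min b c", OF that] by simp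
  qed
  have D: "?D F = ?D G"
  proof (rule measure_eqI_generator_eq[where E="?E" and \<Omega>=UNIV and A="\<lambda>i. {- real i<..real i}"])
    show "emeasure (?D F) X = emeasure (?D G) X" if "X \<in> ?E" for X
      using that em[OF mF rF] em[OF mG rG] eq by auto
    show "emeasure (?D F) {- real i<..real i} \<noteq> \<infinity>" for i
      using em[OF mF rF, of "- real i" "real i"] by auto
  qed (auto simp: Int_stable_Ioc sets_borel_eq_sigma_Ioc UN_Ioc_eq_UNIV)
  have "emeasure (interval_measure H) A = emeasure (?D H) A" for H
    using A by (subst emeasure_restricted) (auto simp: Int_absorb1)
  then show ?thesis using D by metis
qed

lemma emeasure_interval_measure_add:
  fixes F G :: "real \<Rightarrow> real"
  assumes mF: "\<And>x y. x \<le> y \<Longrightarrow> F x \<le> F y" and rF: "\<And>a. continuous (at_right a) F"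
    and mG: "\<And>x y. x \<le> y \<Longrightarrow> G x \<le> G y" and rG: "\<And>a. continuous (at_right a) G"
    and A: "A \<in> sets borel"
  shows "emeasure (interval_measure (\<lambda>x. F x + G x)) A
       = emeasure (interval_measure F) A + emeasure (interval_measure G) A"
proof -
  let ?E = "range (\<lambda>(a, b). {a<..b::real})"
  let ?mu = "\<lambda>A. emeasure (interval_measure F) A + emeasure (interval_measure G) A"
  define N where "N = measure_of UNIV (sets borel) ?mu"
  have sa: "sigma_algebra UNIV (sets borel)"
    using sets.sigma_algebra_axioms[of borel] by simp
  have ca: "countably_additive (sets borel) ?mu"
  proof (rule countably_additiveI)
    fix A :: "nat \<Rightarrow> real set" assume "range A \<subseteq> sets borel" "disjoint_family A"
    then have "(\<Sum>i. emeasure (interval_measure F) (A i)) = emeasure (interval_measure F) (\<Union>i. A i)"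
      "(\<Sum>i. emeasure (interval_measure G) (A i)) = emeasure (interval_measure G) (\<Union>i. A i)"
      by (auto intro!: suminf_emeasure)
    then show "(\<Sum>i. ?mu (A i)) = ?mu (\<Union>i. A i)"
      by (subst suminf_add[symmetric]) auto
  qed
  have eN: "emeasure N B = ?mu B" if "B \<in> sets borel" for B
    unfolding N_def by (rule emeasure_measure_of_sigma[OF sa _ ca that]) (simp add: positive_def)
  have sN: "sets N = sets borel"
    unfolding N_def by (subst sets_measure_of) (auto simp: sigma_algebra.sigma_sets_eq[OF sa])
  have mFG: "\<And>x y. x \<le> y \<Longrightarrow> F x + G x \<le> F y + G y" using mF mG by (simp add: add_mono)
  have rFG: "\<And>a. continuous (at_right a) (\<lambda>x. F x + G x)" using rF rG by (intro continuous_add)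
  have "interval_measure (\<lambda>x. F x + G x) = N"
  proof (rule measure_eqI_generator_eq[where E="?E" and \<Omega>=UNIV and A="\<lambda>i. {- real i<..real i}"])
    show "emeasure (interval_measure (\<lambda>x. F x + G x)) X = emeasure N X" if "X \<in> ?E" for X
    proof -
      obtain a b where X: "X = {a<..b}" using \<open>X \<in> ?E\<close> by auto
      show ?thesis unfolding X eN[of "{a<..b}", simplified]
        using emeasure_interval_measure_Ioc_eq[of F a b, OF mF rF]
          emeasure_interval_measure_Ioc_eq[of G a b, OF mG rG]
          emeasure_interval_measure_Ioc_eq[of "\<lambda>x. F x + G x" a b, OF mFG rFG]
          mF[of a b] mG[of a b]
        by (auto simp: ennreal_plus[symmetric] simp del: ennreal_plus)
    qed
    show "sets N = sigma_sets UNIV ?E" using sets_borel_eq_sigma_Ioc sN by simp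
    show "emeasure (interval_measure (\<lambda>x. F x + G x)) {- real i<..real i} \<noteq> \<infinity>" for i
      using emeasure_interval_measure_Ioc_eq[of "\<lambda>x. F x + G x", OF mFG rFG] by auto
  qed (auto simp: Int_stable_Ioc sets_borel_eq_sigma_Ioc UN_Ioc_eq_UNIV)
  then show ?thesis using eN[OF A] by simp
qed

lemma emeasure_interval_measure_const:
  assumes "A \<in> sets borel"
  shows "emeasure (interval_measure (\<lambda>x. c)) A = 0"
proof -
  have "emeasure (interval_measure (\<lambda>x. c)) UNIV \<le> (\<Sum>i. emeasure (interval_measure (\<lambda>x. c)) {- real i<..real i})"
    using emeasure_subadditive_countably[of "\<lambda>i. {- real i<..real i}" "interval_measure (\<lambda>x. c)"]
    by (simp add: UN_Ioc_eq_UNIV image_subset_iff)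
  also have "\<dots> = 0"
    using emeasure_interval_measure_Ioc_eq[of "\<lambda>x. c"] by simp
  finally have "emeasure (interval_measure (\<lambda>x. c)) UNIV = 0" by simp
  then show ?thesis using emeasure_mono[of A UNIV "interval_measure (\<lambda>x. c)"] assms by simp
qed

lemma ext_zero_mono:
  assumes "mono_on {0..} f" "f 0 \<ge> 0" "x \<le> y"
  shows "ext_zero f x \<le> ext_zero f y"
  using assms mono_onD[OF assms(1), of 0 y] mono_onD[OF assms(1), of x y] by (auto simp: ext_zero_def)

lemma continuous_at_right_ext_zero:
  assumes "\<And>t. t \<ge> 0 \<Longrightarrow> continuous (at_right t) f"
  shows "continuous (at_right a) (ext_zero f)"
proof (cases "a < 0")
  case True
  have "\<forall>\<^sub>F x in at_right a. ext_zero f x = 0"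
    using eventually_at_right_real[of a 0] True by (auto elim!: eventually_mono simp: ext_zero_def)
  then have "(ext_zero f \<longlongrightarrow> 0) (at_right a)" by (rule tendsto_eventually)
  then show ?thesis using True by (simp add: continuous_within ext_zero_def)
next
  case False
  have ev: "\<forall>\<^sub>F x in at_right a. f x = ext_zero f x"
    using False by (auto simp: ext_zero_def intro!: eventually_mono[OF eventually_at_right_less[of a]])
  have "(f \<longlongrightarrow> f a) (at_right a)" using assms[of a] False by (simp add: continuous_within)
  then have "(ext_zero f \<longlongrightarrow> f a) (at_right a)" using ev by (rule Lim_transform_eventually)
  then show ?thesis using False by (simp add: continuous_within ext_zero_def)
qed

lemma nonneg_nondec_cadlag_ext_zero_mono:
  "nonneg_nondec_cadlag f \<Longrightarrow> x \<le> y \<Longrightarrow> ext_zero f x \<le> ext_zero f y"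
  unfolding nonneg_nondec_cadlag_def by (intro ext_zero_mono) auto

lemma nonneg_nondec_cadlag_ext_zero_continuous:
  "nonneg_nondec_cadlag f \<Longrightarrow> continuous (at_right a) (ext_zero f)"
  unfolding nonneg_nondec_cadlag_def cadlag_fun_def by (intro continuous_at_right_ext_zero) auto

lemma borel_measurable_mono_diff:
  fixes p q h :: "real \<Rightarrow> real"
  assumes mp: "mono_on {0..} p" and mq: "mono_on {0..} q" and h: "\<And>t. t \<ge> 0 \<Longrightarrow> h t = p t - q t"
  shows "(\<lambda>t. ennreal (h t) * indicator {0..} t) \<in> borel_measurable borel"
proof -
  define p' where "p' t = p (max t 0)" for t
  define q' where "q' t = q (max t 0)" for t
  have "mono p'" unfolding p'_def by (rule monoI, rule mono_onD[OF mp]) auto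
  then have mp': "p' \<in> borel_measurable borel" by (rule borel_measurable_mono)
  have "mono q'" unfolding q'_def by (rule monoI, rule mono_onD[OF mq]) auto
  then have mq': "q' \<in> borel_measurable borel" by (rule borel_measurable_mono)
  have "(\<lambda>t. ennreal (h t) * indicator {0..} t) = (\<lambda>t. ennreal (p' t - q' t) * indicator {0..} t)"
    by (rule ext) (simp add: h p'_def q'_def indicator_def)
  also have "\<dots> \<in> borel_measurable borel" using mp' mq' by measurable
  finally show ?thesis .
qed

lemma nn_integral_zero_null_cover:
  fixes h :: "real \<Rightarrow> real"
  assumes I: "(\<integral>\<^sup>+ t\<in>{0..}. ennreal (h t) \<partial>M) = 0" and sM: "sets M = sets borel"
    and hm: "(\<lambda>t. ennreal (h t) * indicator {0..} t) \<in> borel_measurable borel"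
  obtains N where "N \<in> sets borel" "emeasure M N = 0" "\<And>t. t \<ge> 0 \<Longrightarrow> h t > 0 \<Longrightarrow> t \<in> N"
proof -
  have hm': "(\<lambda>t. ennreal (h t) * indicator {0..} t) \<in> borel_measurable M"
    by (subst measurable_cong_sets[OF sM refl]) (rule hm)
  have "AE t in M. ennreal (h t) * indicator {0..} t = 0"
    using I nn_integral_0_iff_AE[OF hm'] by simp
  then obtain N where N: "{t \<in> space M. ennreal (h t) * indicator {0..} t \<noteq> 0} \<subseteq> N"
    "emeasure M N = 0" "N \<in> sets M"
    by (rule AE_E)
  have "space M = UNIV" using sets_eq_imp_space_eq[OF sM] by simp
  then show ?thesis using N sM by (intro that[of N]) auto
qed

lemma nn_integral_zero_if_null_cover:
  fixes h :: "real \<Rightarrow> real"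
  assumes N: "N \<in> sets borel" "emeasure M N = 0" and sM: "sets M = sets borel"
    and h: "\<And>t. t \<ge> 0 \<Longrightarrow> h t \<noteq> 0 \<Longrightarrow> t \<in> N"
  shows "(\<integral>\<^sup>+ t\<in>{0..}. ennreal (h t) \<partial>M) = 0"
proof -
  have "AE t in M. ennreal (h t) * indicator {0..} t = 0"
    by (rule AE_I'[of N]) (use N sM h in \<open>auto simp: indicator_def null_sets_def, metis ennreal_0\<close>)
  then have "(\<integral>\<^sup>+ t. ennreal (h t) * indicator {0..} t \<partial>M) = (\<integral>\<^sup>+ t. 0 \<partial>M)"
    by (rule nn_integral_cong_AE)
  then show ?thesis by simp
qed

section \<open>Finite measures on the half-line\<close>

lemma fin_meas_sets: "fin_meas M \<Longrightarrow> sets M = sets borel"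
  by (simp add: fin_meas_def)

lemma fin_meas_space: "fin_meas M \<Longrightarrow> space M = UNIV"
  using sets_eq_imp_space_eq[of M borel] by (simp add: fin_meas_def)

lemma fin_meas_finite_measure: "fin_meas M \<Longrightarrow> finite_measure M"
  by (rule finite_measureI) (simp add: fin_meas_space fin_meas_def less_top)

lemma fin_meas_emeasure_finite: "fin_meas M \<Longrightarrow> emeasure M A \<noteq> \<infinity>"
  using finite_measure.emeasure_finite[OF fin_meas_finite_measure] by auto

lemma fin_meas_emeasure_eq_measure: "fin_meas M \<Longrightarrow> emeasure M A = ennreal (measure M A)"
  using finite_measure.emeasure_eq_measure[OF fin_meas_finite_measure] by auto

lemma fin_meas_measurable: "fin_meas M \<Longrightarrow> f \<in> borel_measurable borel \<Longrightarrow> f \<in> borel_measurable M"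
  using measurable_cong_sets[of M borel] fin_meas_sets by metis

lemma fin_meas_integrable:
  assumes "fin_meas M" "f \<in> borel_measurable borel" "\<And>x. \<bar>f x\<bar> \<le> B"
  shows "integrable M (f :: real \<Rightarrow> real)"
proof -
  have "f \<in> borel_measurable M" using assms(1,2) by (rule fin_meas_measurable)
  moreover have "AE x in M. norm (f x) \<le> B" using assms(3) by simp
  ultimately show ?thesis
    using finite_measure.integrable_const_bound[OF fin_meas_finite_measure[OF assms(1)]] by blast
qed

lemma fin_meas_integrable_indicator:
  assumes "fin_meas M" "A \<in> sets borel"
  shows "integrable M (indicator A :: real \<Rightarrow> real)"
  using assms fin_meas_emeasure_finite[OF assms(1), of A]
  by (intro integrable_real_indicator) (auto simp: fin_meas_sets less_top)

lemma fin_meas_measure_Un: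
  assumes M: "fin_meas M" and A: "A \<in> sets borel" "B \<in> sets borel" "A \<inter> B = {}"
  shows "measure M (A \<union> B) = measure M A + measure M B"
  using M A fin_meas_emeasure_finite[OF M]
  by (intro measure_Union) (auto simp: fin_meas_sets)

lemma fin_meas_measure_Ioi:
  assumes M: "fin_meas M"
  shows "measure M {c<..} = measure M UNIV - measure M {..c}"
proof -
  have "(UNIV :: real set) = {..c} \<union> {c<..}" by auto
  then have "measure M UNIV = measure M ({..c} \<union> {c<..})" by simp
  also have "\<dots> = measure M {..c} + measure M {c<..}" by (rule fin_meas_measure_Un[OF M]) auto
  finally show ?thesis by simp
qed

lemma fin_meas_measure_mono:
  assumes M: "fin_meas M" and A: "A \<subseteq> B" "B \<in> sets borel"
  shows "measure M A \<le> measure M B"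
  using A M by (intro finite_measure.finite_measure_mono[OF fin_meas_finite_measure[OF M]])
    (auto simp: fin_meas_sets)

lemma fin_meas_measure_negative: "fin_meas M \<Longrightarrow> measure M {..<0} = 0"
  by (simp add: fin_meas_def measure_def)

lemma fin_meas_measure_Iic:
  assumes M: "fin_meas M" and x: "0 \<le> x"
  shows "measure M {..x} = measure M {0..x}"
proof -
  have "{..x} = {..<0} \<union> {0..x}" using x by auto
  then show ?thesis
    by (simp add: fin_meas_measure_Un[OF M] fin_meas_measure_negative[OF M] ivl_disj_int)
qed

lemma fin_meas_measure_atLeast0:
  assumes M: "fin_meas M" shows "measure M {0..} = measure M UNIV"
proof -
  have "{..<0} \<union> {0..} = (UNIV :: real set)" by auto
  then have "measure M UNIV = measure M ({..<0} \<union> {0..})" by simp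
  also have "\<dots> = measure M {0..}"
    using fin_meas_measure_Un[OF M, of "{..<0}" "{0..}"] fin_meas_measure_negative[OF M]
    by (simp add: disjoint_iff)
  finally show ?thesis by simp
qed

lemma fin_meas_measure_Ioc:
  assumes M: "fin_meas M" and ab: "0 \<le> a" "a \<le> b"
  shows "measure M {a<..b} = measure M {0..b} - measure M {0..a}"
proof -
  have "{0..b} = {0..a} \<union> {a<..b}" using ab by auto
  then show ?thesis by (simp add: fin_meas_measure_Un[OF M] ivl_disj_int)
qed

lemma fin_meas_dominated_convergence:
  fixes s :: "nat \<Rightarrow> real \<Rightarrow> real"
  assumes M: "fin_meas M" and "\<And>n. s n \<in> borel_measurable borel" "h \<in> borel_measurable borel"
    and "\<And>n x. \<bar>s n x\<bar> \<le> B" "\<And>x. (\<lambda>n. s n x) \<longlonglongrightarrow> h x"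
  shows "(\<lambda>n. \<integral>x. s n x \<partial>M) \<longlonglongrightarrow> (\<integral>x. h x \<partial>M)"
proof (rule integral_dominated_convergence[where w="\<lambda>_. B"])
  show "integrable M (\<lambda>_. B)" using fin_meas_integrable[OF M, of "\<lambda>_. B" "\<bar>B\<bar>"] by simp
qed (use assms in \<open>auto intro: fin_meas_measurable\<close>)

lemma fin_meas_measure_shrinking_Ioc:
  assumes M: "fin_meas M"
  shows "((\<lambda>d. measure M {c-d<..c+d}) \<longlongrightarrow> measure M {c}) (at_right 0)"
proof (rule tendsto_at_right_sequentially[of 0 1])
  fix S :: "nat \<Rightarrow> real"
  assume pos: "\<And>n. 0 < S n" and dec: "decseq S" and lim: "S \<longlonglongrightarrow> 0"
  have I: "(\<Inter>n. {c - S n<..c + S n}) = {c}"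
  proof (intro equalityI subsetI)
    fix x assume "x \<in> (\<Inter>n. {c - S n<..c + S n})"
    then have "c - S n < x \<and> x \<le> c + S n" for n by simp
    then have "\<bar>x - c\<bar> \<le> S n" for n by (smt (verit))
    then have "\<bar>x - c\<bar> \<le> 0" by (intro LIMSEQ_le_const[OF lim]) auto
    then show "x \<in> {c}" by simp
  next
    fix x assume "x \<in> {c}"
    then show "x \<in> (\<Inter>n. {c - S n<..c + S n})" using pos by (simp add: less_imp_le)
  qed
  have D: "decseq (\<lambda>n. {c - S n<..c + S n})"
  proof (rule decseq_SucI)
    fix n
    have "S (Suc n) \<le> S n" using dec by (simp add: decseq_Suc_iff)
    then show "{c - S (Suc n)<..c + S (Suc n)} \<subseteq> {c - S n<..c + S n}" by auto
  qed
  have "(\<lambda>n. measure M {c - S n<..c + S n}) \<longlonglongrightarrow> measure M (\<Inter>n. {c - S n<..c + S n})"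
    by (rule finite_measure.finite_Lim_measure_decseq[OF fin_meas_finite_measure[OF M] _ D])
      (use M in \<open>auto simp: fin_meas_sets\<close>)
  then show "(\<lambda>n. measure M {c - S n<..c + S n}) \<longlonglongrightarrow> measure M {c}"
    by (simp only: I)
qed simp

lemma fin_meas_no_atom_if_locally_dominated:
  assumes M: "fin_meas M" and L: "fin_meas L" "emeasure L {c} = 0" and d0: "d0 > 0"
    and dom: "\<And>d. 0 < d \<Longrightarrow> d < d0 \<Longrightarrow> measure M {c-d<..c+d} \<le> measure L {c-d<..c+d}"
  shows "emeasure M {c} = 0"
proof -
  have ev: "\<forall>\<^sub>F d in at_right 0. measure M {c} \<le> measure L {c-d<..c+d}"
    using eventually_at_right_real[OF d0]
  proof eventually_elim
    case (elim d)
    then have "measure M {c} \<le> measure M {c-d<..c+d}"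
      by (intro fin_meas_measure_mono[OF M]) auto
    also have "\<dots> \<le> measure L {c-d<..c+d}" using dom elim by simp
    finally show ?case .
  qed
  have "measure M {c} \<le> measure L {c}"
    by (rule tendsto_lowerbound[OF fin_meas_measure_shrinking_Ioc[OF L(1)] ev]) simp
  also have "measure L {c} = 0" using L(2) by (simp add: measure_def)
  finally show ?thesis
    using fin_meas_emeasure_eq_measure[OF M, of "{c}"] measure_nonneg[of M "{c}"] by simp
qed

lemma fin_meas_small_Ioc:
  assumes L: "fin_meas L" "emeasure L {c} = 0" and e: "e > 0"
  obtains d where "d > 0" "measure L {c-d<..c+d} < e"
proof -
  have "measure L {c} < e" using L(2) e by (simp add: measure_def)
  then have "\<forall>\<^sub>F d in at_right 0. 0 < d \<and> measure L {c-d<..c+d} < e"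
    using eventually_at_right_less[of 0] order_tendstoD(2)[OF fin_meas_measure_shrinking_Ioc[OF L(1)]]
    by (intro eventually_conj) auto
  then show ?thesis using that eventually_happens[of _ "at_right (0::real)"] by auto
qed

section \<open>Bounded continuous test functions\<close>

lemma bcontE:
  assumes "bcont f" obtains B where "B > 0" "\<And>x. \<bar>f x\<bar> \<le> B"
  using assms unfolding bcont_def bounded_pos by auto

lemma bcont_measurable: "bcont f \<Longrightarrow> f \<in> borel_measurable borel"
  by (simp add: bcont_def borel_measurable_continuous_onI)

lemma bcontI:
  assumes "continuous_on UNIV f" "\<And>x. \<bar>f x\<bar> \<le> B"
  shows "bcont f"
  unfolding bcont_def bounded_iff using assms by auto

lemma bcont_const: "bcont (\<lambda>x. c)"
  by (rule bcontI[where B="\<bar>c\<bar>"]) auto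

lemma bcont_mult: "bcont f \<Longrightarrow> bcont g \<Longrightarrow> bcont (\<lambda>x. f x * g x)"
proof -
  assume f: "bcont f" and g: "bcont g"
  obtain A where A: "\<And>x. \<bar>f x\<bar> \<le> A" using bcontE[OF f] by blast
  obtain B where B: "\<And>x. \<bar>g x\<bar> \<le> B" using bcontE[OF g] by blast
  show ?thesis
  proof (rule bcontI[where B="A*B"])
    show "continuous_on UNIV (\<lambda>x. f x * g x)" using f g unfolding bcont_def by (intro continuous_on_mult) auto
    show "\<bar>f x * g x\<bar> \<le> A * B" for x
      unfolding abs_mult by (rule mult_mono) (use A[of x] B[of x] in auto)
  qed
qed

lemma bcont_diff: "bcont f \<Longrightarrow> bcont g \<Longrightarrow> bcont (\<lambda>x. f x - g x)"
proof -
  assume f: "bcont f" and g: "bcont g"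
  obtain A where A: "\<And>x. \<bar>f x\<bar> \<le> A" using bcontE[OF f] by blast
  obtain B where B: "\<And>x. \<bar>g x\<bar> \<le> B" using bcontE[OF g] by blast
  show ?thesis
  proof (rule bcontI[where B="A+B"])
    show "continuous_on UNIV (\<lambda>x. f x - g x)" using f g unfolding bcont_def by (intro continuous_on_diff) auto
    show "\<bar>f x - g x\<bar> \<le> A + B" for x using A[of x] B[of x] by linarith
  qed
qed

lemma bcont_shift: "bcont f \<Longrightarrow> bcont (\<lambda>x. f (x + a))"
proof -
  assume f: "bcont f"
  obtain A where A: "\<And>x. \<bar>f x\<bar> \<le> A" using bcontE[OF f] by blast
  show ?thesis
  proof (rule bcontI[where B=A])
    have "continuous_on UNIV (f \<circ> (\<lambda>x. x + a))"
      by (rule continuous_on_compose) (use f in \<open>auto simp: bcont_def intro!: continuous_intros\<close>)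
    then show "continuous_on UNIV (\<lambda>x. f (x + a))" by (simp add: o_def)
  qed (rule A)
qed

definition ramp :: "real \<Rightarrow> real \<Rightarrow> real \<Rightarrow> real" where
  "ramp c d y = max 0 (min 1 ((c + d - y) / d))"

lemma ramp_ge0: "0 \<le> ramp c d y"
  by (simp add: ramp_def)

lemma ramp_le1: "ramp c d y \<le> 1"
  by (simp add: ramp_def)

lemma ramp_eq_1: "d > 0 \<Longrightarrow> y \<le> c \<Longrightarrow> ramp c d y = 1"
  by (simp add: ramp_def)

lemma ramp_eq_0: "d > 0 \<Longrightarrow> c + d \<le> y \<Longrightarrow> ramp c d y = 0"
  by (simp add: ramp_def divide_nonpos_pos)

lemma ramp_antimono: "d > 0 \<Longrightarrow> x \<le> y \<Longrightarrow> ramp c d y \<le> ramp c d x"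
  unfolding ramp_def by (intro max.mono min.mono divide_right_mono) auto

lemma bcont_ramp: "d > 0 \<Longrightarrow> bcont (ramp c d)"
proof (rule bcontI[where B=1])
  show "d > 0 \<Longrightarrow> continuous_on UNIV (ramp c d)"
    unfolding ramp_def by (intro continuous_intros) auto
  show "\<bar>ramp c d x\<bar> \<le> 1" for x using ramp_ge0[of c d x] ramp_le1[of c d x] by linarith
qed

lemma ramp_tendsto_indicator: "(\<lambda>n. ramp c (1 / Suc n) y) \<longlonglongrightarrow> indicator {..c} y"
proof (cases "y \<le> c")
  case True
  then show ?thesis by (simp add: ramp_eq_1)
next
  case False
  then obtain N :: nat where N: "1 / real (Suc N) < y - c"
    using reals_Archimedean[of "y - c"] by (auto simp: divide_inverse)
  have "ramp c (1 / Suc n) y = 0" if "n \<ge> N" for n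
  proof -
    have "1 / real (Suc n) \<le> 1 / Suc N" using that by (intro divide_left_mono) auto
    then show ?thesis using N by (intro ramp_eq_0) auto
  qed
  then have "(\<lambda>n. ramp c (1 / Suc n) y) \<longlonglongrightarrow> 0"
    by (intro tendsto_eventually) (auto simp: eventually_sequentially)
  then show ?thesis using False by simp
qed

definition tent :: "real \<Rightarrow> real \<Rightarrow> real \<Rightarrow> real" where
  "tent c d x = ramp c d x - ramp c d (x + d)"

lemma bcont_tent: "d > 0 \<Longrightarrow> bcont (tent c d)"
  unfolding tent_def by (intro bcont_diff bcont_ramp bcont_shift[of "ramp c d"]) auto

lemma tent_ge0: "d > 0 \<Longrightarrow> 0 \<le> tent c d x"
  unfolding tent_def using ramp_antimono[of d x "x + d" c] by simp

lemma tent_le_indicator: "d > 0 \<Longrightarrow> tent c d x \<le> indicator {c-d<..c+d} x"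
  using ramp_le1[of c d x] ramp_ge0[of c d "x+d"]
  by (cases "x \<le> c - d"; cases "x \<ge> c + d") (auto simp: tent_def ramp_eq_1 ramp_eq_0)

lemma tent_ge_indicator: "d > 0 \<Longrightarrow> indicator {c} x \<le> tent c d x"
  using tent_ge0[of d c x] by (auto simp: indicator_def tent_def ramp_eq_1 ramp_eq_0)

lemma fin_meas_integrable_tent:
  assumes M: "fin_meas M" and d: "d > 0"
  shows "integrable M (tent c d)"
proof -
  have "\<bar>tent c d x\<bar> \<le> 1" for x
    using tent_ge0[OF d, of c x] tent_le_indicator[OF d, of c x]
    by (cases "c - d < x \<and> x \<le> c + d") (auto simp: indicator_def)
  then show ?thesis using fin_meas_integrable[OF M bcont_measurable[OF bcont_tent[OF d]]] by blast
qed

lemma integral_tent_le: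
  assumes M: "fin_meas M" and d: "d > 0"
  shows "(\<integral>x. tent c d x \<partial>M) \<le> measure M {c-d<..c+d}"
proof -
  have "(\<integral>x. tent c d x \<partial>M) \<le> (\<integral>x. indicator {c-d<..c+d} x \<partial>M)"
    by (intro integral_mono fin_meas_integrable_tent fin_meas_integrable_indicator M d tent_le_indicator)
      simp
  then show ?thesis using fin_meas_space[OF M] by simp
qed

lemma integral_tent_ge:
  assumes M: "fin_meas M" and d: "d > 0"
  shows "measure M {c} \<le> (\<integral>x. tent c d x \<partial>M)"
proof -
  have "(\<integral>x. indicator {c} x \<partial>M) \<le> (\<integral>x. tent c d x \<partial>M)"
    by (intro integral_mono fin_meas_integrable_tent fin_meas_integrable_indicator M d tent_ge_indicator)
      simp
  then show ?thesis using fin_meas_space[OF M] by simp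
qed

section \<open>Restriction to a half-line and weak convergence\<close>

definition restrict_atMost :: "real \<Rightarrow> real measure \<Rightarrow> real measure" where
  "restrict_atMost c M = density M (indicator {..c})"

lemma sets_restrict_atMost [simp]: "sets (restrict_atMost c M) = sets M"
  by (simp add: restrict_atMost_def)

lemma emeasure_restrict_atMost:
  "fin_meas M \<Longrightarrow> B \<in> sets borel \<Longrightarrow> emeasure (restrict_atMost c M) B = emeasure M ({..c} \<inter> B)"
  unfolding restrict_atMost_def by (rule emeasure_restricted) (auto simp: fin_meas_sets)

lemma measure_restrict_atMost:
  "fin_meas M \<Longrightarrow> B \<in> sets borel \<Longrightarrow> measure (restrict_atMost c M) B = measure M ({..c} \<inter> B)"
  unfolding measure_def by (simp only: emeasure_restrict_atMost)

lemma fin_meas_restrict_atMost: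
  assumes M: "fin_meas M" shows "fin_meas (restrict_atMost c M)"
proof -
  have "emeasure (restrict_atMost c M) UNIV \<le> emeasure M UNIV"
    using M by (simp add: emeasure_restrict_atMost emeasure_mono fin_meas_sets)
  moreover have "emeasure (restrict_atMost c M) {..<0} \<le> emeasure M {..<0}"
    using M by (simp add: emeasure_restrict_atMost emeasure_mono fin_meas_sets)
  ultimately show ?thesis using M unfolding fin_meas_def by (auto intro: le_less_trans)
qed

lemma integral_restrict_atMost:
  assumes M: "fin_meas M" and f: "f \<in> borel_measurable borel"
  shows "integral\<^sup>L (restrict_atMost c M) f = (\<integral>x. indicator {..c} x * (f x :: real) \<partial>M)"
proof -
  have "integral\<^sup>L (density M (\<lambda>x. ennreal (indicator {..c} x))) f = (\<integral>x. indicator {..c} x *\<^sub>R f x \<partial>M)"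
    by (rule integral_density) (auto intro: fin_meas_measurable[OF M] f)
  then show ?thesis by (simp add: ennreal_indicator restrict_atMost_def)
qed

lemma supp_meas_restrict_atMost:
  assumes M: "fin_meas M" and z: "z \<in> supp_meas M" "z < c"
  shows "z \<in> supp_meas (restrict_atMost c M)"
  unfolding supp_meas_def
proof (intro CollectI allI impI)
  fix e :: real assume e: "e > 0"
  define e' where "e' = min e (c - z)"
  have e': "e' > 0" using e z by (simp add: e'_def)
  have "emeasure M {z - e'<..<z + e'} \<noteq> 0" using z(1) e' unfolding supp_meas_def by blast
  moreover have "emeasure M {z - e'<..<z + e'} \<le> emeasure M ({..c} \<inter> {z - e<..<z + e})"
    by (rule emeasure_mono) (auto simp: e'_def fin_meas_sets[OF M])
  ultimately show "emeasure (restrict_atMost c M) {z - e<..<z + e} \<noteq> 0"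
    by (auto simp: emeasure_restrict_atMost[OF M])
qed

lemma inf_supp_restrict_atMost:
  assumes M: "fin_meas M" and lt: "inf_supp M < ereal c"
  shows "inf_supp (restrict_atMost c M) \<le> inf_supp M"
  unfolding inf_supp_def
proof (rule Inf_mono)
  fix b assume "b \<in> ereal ` supp_meas M"
  then obtain z where zb: "b = ereal z" and z: "z \<in> supp_meas M" by blast
  obtain z' where z': "z' \<in> supp_meas M" "z' < c"
    using lt unfolding inf_supp_def Inf_less_iff by auto
  show "\<exists>a\<in>ereal ` supp_meas (restrict_atMost c M). a \<le> b"
  proof (cases "z < c")
    case True
    then show ?thesis using supp_meas_restrict_atMost[OF M z True] zb by blast
  next
    case False
    then have "ereal z' \<le> b" using z'(2) zb by simp
    then show ?thesis using supp_meas_restrict_atMost[OF M z'] by blast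
  qed
qed

lemma abs_integral_atMost_ramp_le:
  assumes M: "fin_meas M" and d: "d > 0" and f: "bcont f" and B: "\<And>x. \<bar>f x\<bar> \<le> B"
  shows "\<bar>(\<integral>x. indicator {..c} x * f x \<partial>M) - (\<integral>x. f x * ramp c d x \<partial>M)\<bar> \<le> B * (\<integral>x. tent c d x \<partial>M)"
proof -
  have fm: "f \<in> borel_measurable borel" by (rule bcont_measurable[OF f])
  have cm: "ramp c d \<in> borel_measurable borel" by (rule bcont_measurable[OF bcont_ramp[OF d]])
  have B0: "B \<ge> 0" using B[of 0] by linarith
  have i1: "integrable M (\<lambda>x. indicator {..c} x * f x)"
    by (rule fin_meas_integrable[OF M _, of _ B]) (use fm B B0 in \<open>auto simp: indicator_def\<close>)
  have i2: "integrable M (\<lambda>x. f x * ramp c d x)"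
  proof (rule fin_meas_integrable[OF M _, of _ B])
    show "(\<lambda>x. f x * ramp c d x) \<in> borel_measurable borel" using fm cm by measurable
    show "\<bar>f x * ramp c d x\<bar> \<le> B" for x
      using B[of x] ramp_ge0[of c d x] ramp_le1[of c d x] mult_mono[of "\<bar>f x\<bar>" B "\<bar>ramp c d x\<bar>" 1] B0
      by (auto simp: abs_mult)
  qed
  have i3: "integrable M (\<lambda>x. B * tent c d x)"
    using fin_meas_integrable_tent[OF M d] by simp
  have pw: "\<bar>indicator {..c} x * f x - f x * ramp c d x\<bar> \<le> B * tent c d x" for x
  proof (cases "x \<le> c")
    case True
    then show ?thesis using ramp_eq_1[OF d True] tent_ge0[OF d, of c x] B0 by simp
  next
    case False
    then have "tent c d x = ramp c d x" using d by (simp add: tent_def ramp_eq_0)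
    then show ?thesis using False B[of x] ramp_ge0[of c d x] mult_right_mono[of "\<bar>f x\<bar>" B "ramp c d x"]
      by (simp add: abs_mult mult.commute)
  qed
  have "\<bar>(\<integral>x. indicator {..c} x * f x \<partial>M) - (\<integral>x. f x * ramp c d x \<partial>M)\<bar>
      = \<bar>\<integral>x. indicator {..c} x * f x - f x * ramp c d x \<partial>M\<bar>"
    using i1 i2 by simp
  also have "\<dots> \<le> (\<integral>x. B * tent c d x \<partial>M)"
    by (rule integral_abs_bound_integral) (use i1 i2 i3 pw in auto)
  also have "\<dots> = B * (\<integral>x. tent c d x \<partial>M)" by simp
  finally show ?thesis .
qed

lemma weak_tendsto_cong:
  assumes "weak_tendsto \<zeta> \<nu> F" "\<forall>\<^sub>F s in F. \<zeta>' s = \<zeta> s"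
  shows "weak_tendsto \<zeta>' \<nu> F"
  unfolding weak_tendsto_def
proof (intro allI impI)
  fix f assume "bcont f"
  then have "((\<lambda>t. integral\<^sup>L (\<zeta> t) f) \<longlongrightarrow> integral\<^sup>L \<nu> f) F" using assms(1) by (simp add: weak_tendsto_def)
  moreover have "\<forall>\<^sub>F s in F. integral\<^sup>L (\<zeta> s) f = integral\<^sup>L (\<zeta>' s) f"
    using assms(2) by eventually_elim simp
  ultimately show "((\<lambda>t. integral\<^sup>L (\<zeta>' t) f) \<longlongrightarrow> integral\<^sup>L \<nu> f) F" by (rule Lim_transform_eventually)
qed

lemma weak_tendsto_eventually_const:
  assumes "\<forall>\<^sub>F s in F. \<zeta> s = \<nu>"
  shows "weak_tendsto \<zeta> \<nu> F"
  by (rule weak_tendsto_cong[of "\<lambda>_. \<nu>"]) (use assms in \<open>auto simp: weak_tendsto_def\<close>)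

lemma weak_tendsto_total_mass:
  assumes "weak_tendsto \<zeta> \<nu> F" "\<forall>\<^sub>F s in F. fin_meas (\<zeta> s)" "fin_meas \<nu>"
  shows "((\<lambda>s. measure (\<zeta> s) UNIV) \<longlongrightarrow> measure \<nu> UNIV) F"
proof -
  have "((\<lambda>s. integral\<^sup>L (\<zeta> s) (\<lambda>_. 1::real)) \<longlongrightarrow> integral\<^sup>L \<nu> (\<lambda>_. 1::real)) F"
    using assms(1) bcont_const[of "1::real"] unfolding weak_tendsto_def by blast
  moreover have "\<forall>\<^sub>F s in F. integral\<^sup>L (\<zeta> s) (\<lambda>_. 1::real) = measure (\<zeta> s) UNIV"
    using assms(2) by eventually_elim (simp add: fin_meas_space)
  ultimately show ?thesis using assms(3) by (simp add: fin_meas_space Lim_transform_eventually)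
qed

lemma weak_limit_no_atom_if_locally_dominated:
  assumes wt: "weak_tendsto \<zeta> \<nu> F" and F: "F \<noteq> bot" and \<nu>: "fin_meas \<nu>"
    and L: "fin_meas L" "emeasure L {c} = 0" and d0: "d0 > 0"
    and dom: "\<And>d. 0 < d \<Longrightarrow> d < d0 \<Longrightarrow>
       \<forall>\<^sub>F s in F. fin_meas (\<zeta> s) \<and> measure (\<zeta> s) {c-d<..c+d} \<le> measure L {c-d<..c+d}"
  shows "emeasure \<nu> {c} = 0"
proof -
  have "\<forall>\<^sub>F d in at_right 0. measure \<nu> {c} \<le> measure L {c-d<..c+d}"
    using eventually_at_right_real[OF d0]
  proof eventually_elim
    case (elim d)
    then have d: "0 < d" "d < d0" by auto
    have "((\<lambda>s. integral\<^sup>L (\<zeta> s) (tent c d)) \<longlongrightarrow> integral\<^sup>L \<nu> (tent c d)) F"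
      using wt bcont_tent[OF d(1)] unfolding weak_tendsto_def by blast
    moreover have "\<forall>\<^sub>F s in F. integral\<^sup>L (\<zeta> s) (tent c d) \<le> measure L {c-d<..c+d}"
      using dom[OF d] by eventually_elim (use integral_tent_le[OF _ d(1)] in \<open>auto intro: order_trans\<close>)
    ultimately have "integral\<^sup>L \<nu> (tent c d) \<le> measure L {c-d<..c+d}"
      using F by (rule tendsto_upperbound)
    then show ?case using integral_tent_ge[OF \<nu> d(1), of c] by linarith
  qed
  then have "measure \<nu> {c} \<le> measure L {c}"
    by (rule tendsto_lowerbound[OF fin_meas_measure_shrinking_Ioc[OF L(1)]]) simp
  also have "measure L {c} = 0" using L(2) by (simp add: measure_def)
  finally show ?thesis
    using fin_meas_emeasure_eq_measure[OF \<nu>, of "{c}"] measure_nonneg[of \<nu> "{c}"] by simp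
qed

lemma weak_tendsto_restrict_atMost:
  assumes wt: "weak_tendsto \<zeta> \<nu> F" and ev: "\<forall>\<^sub>F s in F. fin_meas (\<zeta> s)"
    and \<nu>: "fin_meas \<nu>" and atom: "emeasure \<nu> {c} = 0"
  shows "weak_tendsto (\<lambda>s. restrict_atMost c (\<zeta> s)) (restrict_atMost c \<nu>) F"
  unfolding weak_tendsto_def
proof (intro allI impI)
  fix f assume f: "bcont f"
  obtain B where B: "B > 0" "\<And>x. \<bar>f x\<bar> \<le> B" using bcontE[OF f] by blast
  have fm: "f \<in> borel_measurable borel" by (rule bcont_measurable[OF f])
  let ?h = "\<lambda>x. indicator {..c} x * f x"
  have "((\<lambda>s. \<integral>x. ?h x \<partial>\<zeta> s) \<longlongrightarrow> (\<integral>x. ?h x \<partial>\<nu>)) F"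
  proof (rule tendstoI)
    fix e :: real assume e: "e > 0"
    define \<eta> where "\<eta> = e / (4 * (B + 1))"
    have \<eta>: "\<eta> > 0" "B * \<eta> < e / 4" using e B by (simp_all add: \<eta>_def field_simps)
    \<comment> \<open>Replace the indicator of \<open>{..c}\<close> by a ramp; the error is the mass near \<open>c\<close>, small as \<open>\<nu>\<close> has no atom at \<open>c\<close>.\<close>
    obtain d where d: "d > 0" "measure \<nu> {c-d<..c+d} < \<eta>"
      using fin_meas_small_Ioc[OF \<nu> atom \<eta>(1)] .
    have small: "(\<integral>x. tent c d x \<partial>\<nu>) < \<eta>"
      using integral_tent_le[OF \<nu> d(1), of c] d(2) by simp
    have ramp_lim: "((\<lambda>s. integral\<^sup>L (\<zeta> s) (\<lambda>x. f x * ramp c d x)) \<longlongrightarrow> integral\<^sup>L \<nu> (\<lambda>x. f x * ramp c d x)) F"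
      using wt bcont_mult[OF f bcont_ramp[OF d(1)]] unfolding weak_tendsto_def by blast
    have tent_lim: "((\<lambda>s. integral\<^sup>L (\<zeta> s) (tent c d)) \<longlongrightarrow> integral\<^sup>L \<nu> (tent c d)) F"
      using wt bcont_tent[OF d(1)] unfolding weak_tendsto_def by blast
    have ev1: "\<forall>\<^sub>F s in F. dist (integral\<^sup>L (\<zeta> s) (\<lambda>x. f x * ramp c d x)) (integral\<^sup>L \<nu> (\<lambda>x. f x * ramp c d x)) < e / 4"
      by (rule tendstoD[OF ramp_lim]) (use e in simp)
    have ev2: "\<forall>\<^sub>F s in F. dist (integral\<^sup>L (\<zeta> s) (tent c d)) (integral\<^sup>L \<nu> (tent c d)) < \<eta>"
      by (rule tendstoD[OF tent_lim \<eta>(1)])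
    show "\<forall>\<^sub>F s in F. dist (\<integral>x. ?h x \<partial>\<zeta> s) (\<integral>x. ?h x \<partial>\<nu>) < e"
      using ev ev1 ev2
    proof eventually_elim
      case (elim s)
      have "\<bar>(\<integral>x. ?h x \<partial>\<zeta> s) - integral\<^sup>L (\<zeta> s) (\<lambda>x. f x * ramp c d x)\<bar> \<le> B * integral\<^sup>L (\<zeta> s) (tent c d)"
        using abs_integral_atMost_ramp_le[OF elim(1) d(1) f B(2)] .
      moreover have "\<bar>(\<integral>x. ?h x \<partial>\<nu>) - integral\<^sup>L \<nu> (\<lambda>x. f x * ramp c d x)\<bar> \<le> B * integral\<^sup>L \<nu> (tent c d)"
        using abs_integral_atMost_ramp_le[OF \<nu> d(1) f B(2)] .
      moreover have "B * integral\<^sup>L (\<zeta> s) (tent c d) \<le> B * (2 * \<eta>)"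
        using elim(3) small B(1) by (simp add: dist_real_def)
      moreover have "B * integral\<^sup>L \<nu> (tent c d) \<le> B * \<eta>"
        using small B(1) by simp
      ultimately show ?case using elim(2) \<eta>(2) unfolding dist_real_def by linarith
    qed
  qed
  moreover have "\<forall>\<^sub>F s in F. (\<integral>x. ?h x \<partial>\<zeta> s) = integral\<^sup>L (restrict_atMost c (\<zeta> s)) f"
    using ev by eventually_elim (simp add: integral_restrict_atMost[OF _ fm])
  ultimately show "((\<lambda>s. integral\<^sup>L (restrict_atMost c (\<zeta> s)) f) \<longlongrightarrow> integral\<^sup>L (restrict_atMost c \<nu>) f) F"
    by (simp add: integral_restrict_atMost[OF \<nu> fm] Lim_transform_eventually)
qed

section \<open>Cadlag measure-valued paths\<close>

lemma cadlag_M_fin_meas: "cadlag_M \<zeta> \<Longrightarrow> t \<ge> 0 \<Longrightarrow> fin_meas (\<zeta> t)"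
  by (simp add: cadlag_M_def)

lemma cadlag_M_up_fin_meas: "cadlag_M_up \<zeta> \<Longrightarrow> t \<ge> 0 \<Longrightarrow> fin_meas (\<zeta> t)"
  by (simp add: cadlag_M_up_def cadlag_M_def)

lemma cadlag_M_up_integral_limit_mono:
  fixes g :: "nat \<Rightarrow> real \<Rightarrow> real"
  assumes up: "cadlag_M_up \<zeta>" and st: "0 \<le> s" "s \<le> t"
    and bound: "\<And>n x. \<bar>g n x\<bar> \<le> B" and lim: "\<And>x. (\<lambda>n. g n x) \<longlonglongrightarrow> h x"
    and g: "\<And>n. bcont (g n)" "\<And>n x. 0 \<le> g n x" and h: "h \<in> borel_measurable borel"
  shows "(\<integral>x. h x \<partial>\<zeta> s) \<le> (\<integral>x. h x \<partial>\<zeta> t)"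
proof -
  have lim_int: "(\<lambda>n. \<integral>x. g n x \<partial>\<zeta> r) \<longlonglongrightarrow> (\<integral>x. h x \<partial>\<zeta> r)" if "r \<ge> 0" for r
    by (rule fin_meas_dominated_convergence[OF cadlag_M_up_fin_meas[OF up that]
          bcont_measurable[OF g(1)] h bound lim])
  have le: "(\<integral>x. g n x \<partial>\<zeta> s) \<le> (\<integral>x. g n x \<partial>\<zeta> t)" for n
  proof -
    have "mono_on {0..} (\<lambda>t. integral\<^sup>L (\<zeta> t) (g n))"
      using up g(1,2) unfolding cadlag_M_up_def by simp
    then show ?thesis using st by (simp add: mono_on_def)
  qed
  show ?thesis
    using LIMSEQ_le[OF lim_int[OF st(1)] lim_int] le st by auto
qed

lemma cadlag_M_up_integral_atMost_mono:
  assumes up: "cadlag_M_up \<zeta>" and st: "0 \<le> s" "s \<le> t" and f: "bcont f" "\<And>x. f x \<ge> 0"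
  shows "(\<integral>x. indicator {..c} x * f x \<partial>\<zeta> s) \<le> (\<integral>x. indicator {..c} x * f x \<partial>\<zeta> t)"
proof -
  obtain B where B: "\<And>x. \<bar>f x\<bar> \<le> B" using bcontE[OF f(1)] by blast
  have "\<bar>ramp c (1 / Suc n) x * f x\<bar> \<le> B" for n x
    using B[of x] ramp_ge0[of c "1 / Suc n" x] ramp_le1[of c "1 / Suc n" x]
    by (auto simp: abs_mult intro: order_trans[OF mult_right_mono[of _ 1]])
  then show ?thesis
  proof (rule cadlag_M_up_integral_limit_mono[OF up st, where g="\<lambda>n x. ramp c (1 / Suc n) x * f x"])
    show "bcont (\<lambda>x. ramp c (1 / Suc n) x * f x)" for n by (intro bcont_mult bcont_ramp f(1)) simp
    show "0 \<le> ramp c (1 / Suc n) x * f x" for n x using ramp_ge0 f(2) by simp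
    show "(\<lambda>n. ramp c (1 / Suc n) x * f x) \<longlonglongrightarrow> indicator {..c} x * f x" for x
      by (intro tendsto_mult ramp_tendsto_indicator tendsto_const)
    show "(\<lambda>x. indicator {..c} x * f x) \<in> borel_measurable borel"
      using bcont_measurable[OF f(1)] by measurable
  qed
qed

lemma cadlag_M_up_measure_mono:
  assumes up: "cadlag_M_up \<zeta>" and st: "0 \<le> s" "s \<le> t"
  shows "measure (\<zeta> s) {..c} \<le> measure (\<zeta> t) {..c}" "measure (\<zeta> s) {c<..} \<le> measure (\<zeta> t) {c<..}"
proof -
  have space: "space (\<zeta> r) = UNIV" if "r \<ge> 0" for r
    using cadlag_M_up_fin_meas[OF up that] by (rule fin_meas_space)
  show "measure (\<zeta> s) {..c} \<le> measure (\<zeta> t) {..c}"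
    using cadlag_M_up_integral_atMost_mono[OF up st bcont_const[of 1], of c] space st by simp
  have "(\<lambda>n. 1 - ramp c (1 / Suc n) x) \<longlonglongrightarrow> 1 - indicator {..c} x" for x
    by (intro tendsto_diff tendsto_const ramp_tendsto_indicator)
  moreover have "1 - indicator {..c} x = (indicator {c<..} x :: real)" for x
    by (simp add: indicator_def)
  ultimately have lim: "(\<lambda>n. 1 - ramp c (1 / Suc n) x) \<longlonglongrightarrow> indicator {c<..} x" for x
    by metis
  have "\<bar>1 - ramp c (1 / Suc n) x\<bar> \<le> 1" for n x
    using ramp_ge0[of c "1 / Suc n" x] ramp_le1[of c "1 / Suc n" x] by simp
  then have "(\<integral>x. indicator {c<..} x \<partial>\<zeta> s) \<le> (\<integral>x. (indicator {c<..} x :: real) \<partial>\<zeta> t)"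
  proof (rule cadlag_M_up_integral_limit_mono[OF up st, where g="\<lambda>n x. 1 - ramp c (1 / Suc n) x"])
    show "bcont (\<lambda>x. 1 - ramp c (1 / Suc n) x)" for n by (intro bcont_diff bcont_const bcont_ramp) simp
    show "0 \<le> 1 - ramp c (1 / Suc n) x" for n x using ramp_le1 by simp
  qed (use lim in auto)
  then show "measure (\<zeta> s) {c<..} \<le> measure (\<zeta> t) {c<..}" using space st by simp
qed

lemma cadlag_M_up_total_mass_mono:
  assumes up: "cadlag_M_up \<zeta>" and st: "0 \<le> s" "s \<le> t"
  shows "measure (\<zeta> s) UNIV \<le> measure (\<zeta> t) UNIV"
  using cadlag_M_up_measure_mono[OF up st, of 0] st
    fin_meas_measure_Ioi[OF cadlag_M_up_fin_meas[OF up], of s 0]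
    fin_meas_measure_Ioi[OF cadlag_M_up_fin_meas[OF up], of t 0]
  by simp

lemma cadlag_M_stopped:
  assumes c: "cadlag_M \<zeta>" and \<tau>: "\<tau> \<ge> 0"
  shows "cadlag_M (\<lambda>t. \<zeta> (min t \<tau>))"
proof -
  have fin: "\<And>t. t \<ge> 0 \<Longrightarrow> fin_meas (\<zeta> t)" and
    rt: "\<And>t. t \<ge> 0 \<Longrightarrow> weak_tendsto \<zeta> (\<zeta> t) (at_right t)" and
    lt: "\<And>t. t > 0 \<Longrightarrow> \<exists>\<nu>. fin_meas \<nu> \<and> weak_tendsto \<zeta> \<nu> (at_left t)"
    using c unfolding cadlag_M_def by auto
  have "weak_tendsto (\<lambda>t. \<zeta> (min t \<tau>)) (\<zeta> (min t \<tau>)) (at_right t)" if t: "t \<ge> 0" for t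
  proof (cases "t < \<tau>")
    case True
    have "\<forall>\<^sub>F s in at_right t. \<zeta> (min s \<tau>) = \<zeta> s"
      using eventually_at_right_real[OF True] by eventually_elim auto
    then show ?thesis using weak_tendsto_cong[OF rt[OF t]] True by simp
  next
    case False
    have "\<forall>\<^sub>F s in at_right t. \<zeta> (min s \<tau>) = \<zeta> (min t \<tau>)"
      using eventually_at_right_less[of t] by eventually_elim (use False in auto)
    then show ?thesis by (rule weak_tendsto_eventually_const)
  qed
  moreover have "\<exists>\<nu>. fin_meas \<nu> \<and> weak_tendsto (\<lambda>t. \<zeta> (min t \<tau>)) \<nu> (at_left t)" if t: "t > 0" for t
  proof (cases "t \<le> \<tau>")
    case True
    obtain \<nu> where \<nu>: "fin_meas \<nu>" "weak_tendsto \<zeta> \<nu> (at_left t)" using lt[OF t] by blast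
    have "\<forall>\<^sub>F s in at_left t. \<zeta> (min s \<tau>) = \<zeta> s"
      using eventually_at_left_real[OF t] by eventually_elim (use True in auto)
    then have "weak_tendsto (\<lambda>t. \<zeta> (min t \<tau>)) \<nu> (at_left t)" by (rule weak_tendsto_cong[OF \<nu>(2)])
    then show ?thesis using \<nu>(1) by blast
  next
    case False
    have "\<forall>\<^sub>F s in at_left t. \<zeta> (min s \<tau>) = \<zeta> \<tau>"
      using eventually_at_left_real[of \<tau> t] False by (auto elim: eventually_mono)
    then have "weak_tendsto (\<lambda>t. \<zeta> (min t \<tau>)) (\<zeta> \<tau>) (at_left t)" by (rule weak_tendsto_eventually_const)
    then show ?thesis using fin[OF \<tau>] by blast
  qed
  ultimately show ?thesis using fin \<tau> unfolding cadlag_M_def by simp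
qed

lemma cadlag_M_up_stopped:
  assumes c: "cadlag_M_up \<zeta>" and \<tau>: "\<tau> \<ge> 0"
  shows "cadlag_M_up (\<lambda>t. \<zeta> (min t \<tau>))"
proof -
  have "mono_on {0..} (\<lambda>t. integral\<^sup>L (\<zeta> (min t \<tau>)) f)" if "bcont f" "\<forall>x. f x \<ge> 0" for f
  proof (rule mono_onI)
    fix s t :: real assume "s \<in> {0..}" "t \<in> {0..}" "s \<le> t"
    moreover have "mono_on {0..} (\<lambda>t. integral\<^sup>L (\<zeta> t) f)" using c that unfolding cadlag_M_up_def by blast
    ultimately show "integral\<^sup>L (\<zeta> (min s \<tau>)) f \<le> integral\<^sup>L (\<zeta> (min t \<tau>)) f"
      using \<tau> by (auto elim!: mono_onD)
  qed
  then show ?thesis using c cadlag_M_stopped[OF _ \<tau>] unfolding cadlag_M_up_def by blast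
qed

definition atomless_dominated :: "(real \<Rightarrow> real measure) \<Rightarrow> real \<Rightarrow> bool" where
  "atomless_dominated \<zeta> c \<longleftrightarrow> (\<forall>T\<ge>0. \<exists>L. fin_meas L \<and> emeasure L {c} = 0 \<and>
      (\<forall>s\<in>{0..T}. \<forall>a b. 0 \<le> a \<longrightarrow> a \<le> b \<longrightarrow> measure (\<zeta> s) {a<..b} \<le> measure L {a<..b}))"

lemma cadlag_M_restrict_atMost:
  assumes c: "cadlag_M \<zeta>" and \<tau>: "\<tau> > 0" and dom: "atomless_dominated \<zeta> \<tau>"
  shows "cadlag_M (\<lambda>t. restrict_atMost \<tau> (\<zeta> t))"
proof -
  have fin: "\<And>t. t \<ge> 0 \<Longrightarrow> fin_meas (\<zeta> t)" and
    rt: "\<And>t. t \<ge> 0 \<Longrightarrow> weak_tendsto \<zeta> (\<zeta> t) (at_right t)" and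
    lt: "\<And>t. t > 0 \<Longrightarrow> \<exists>\<nu>. fin_meas \<nu> \<and> weak_tendsto \<zeta> \<nu> (at_left t)"
    using c unfolding cadlag_M_def by auto
  have "weak_tendsto (\<lambda>t. restrict_atMost \<tau> (\<zeta> t)) (restrict_atMost \<tau> (\<zeta> t)) (at_right t)"
    if t: "t \<ge> 0" for t
  proof (rule weak_tendsto_restrict_atMost[OF rt[OF t] _ fin[OF t]])
    show "\<forall>\<^sub>F s in at_right t. fin_meas (\<zeta> s)"
      using eventually_at_right_less[of t] by eventually_elim (use fin t in auto)
    obtain L where L: "fin_meas L" "emeasure L {\<tau>} = 0"
      "\<forall>s\<in>{0..t}. \<forall>a b. 0 \<le> a \<longrightarrow> a \<le> b \<longrightarrow> measure (\<zeta> s) {a<..b} \<le> measure L {a<..b}"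
      using dom t unfolding atomless_dominated_def by blast
    show "emeasure (\<zeta> t) {\<tau>} = 0"
      by (rule fin_meas_no_atom_if_locally_dominated[OF fin[OF t] L(1,2) \<tau>]) (use L(3) t in auto)
  qed
  moreover have "\<exists>\<nu>. fin_meas \<nu> \<and> weak_tendsto (\<lambda>t. restrict_atMost \<tau> (\<zeta> t)) \<nu> (at_left t)"
    if t: "t > 0" for t
  proof -
    obtain \<nu> where \<nu>: "fin_meas \<nu>" "weak_tendsto \<zeta> \<nu> (at_left t)" using lt[OF t] by blast
    obtain L where L: "fin_meas L" "emeasure L {\<tau>} = 0"
      "\<forall>s\<in>{0..t}. \<forall>a b. 0 \<le> a \<longrightarrow> a \<le> b \<longrightarrow> measure (\<zeta> s) {a<..b} \<le> measure L {a<..b}"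
      using dom t unfolding atomless_dominated_def by (meson less_imp_le)
    have evf: "\<forall>\<^sub>F s in at_left t. fin_meas (\<zeta> s)"
      using eventually_at_left_real[OF t] by eventually_elim (use fin in auto)
    have "emeasure \<nu> {\<tau>} = 0"
    proof (rule weak_limit_no_atom_if_locally_dominated[OF \<nu>(2) _ \<nu>(1) L(1,2) \<tau>])
      fix d assume d: "0 < d" "d < \<tau>"
      show "\<forall>\<^sub>F s in at_left t. fin_meas (\<zeta> s) \<and> measure (\<zeta> s) {\<tau> - d<..\<tau> + d} \<le> measure L {\<tau> - d<..\<tau> + d}"
        using eventually_at_left_real[OF t] by eventually_elim (use fin L(3) d in auto)
    qed simp
    then show ?thesis
      using weak_tendsto_restrict_atMost[OF \<nu>(2) evf \<nu>(1)] fin_meas_restrict_atMost[OF \<nu>(1)] by blast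
  qed
  ultimately show ?thesis using fin fin_meas_restrict_atMost unfolding cadlag_M_def by blast
qed

lemma cadlag_M_up_restrict_atMost:
  assumes c: "cadlag_M_up \<zeta>" and \<tau>: "\<tau> > 0" and dom: "atomless_dominated \<zeta> \<tau>"
  shows "cadlag_M_up (\<lambda>t. restrict_atMost \<tau> (\<zeta> t))"
proof -
  have "mono_on {0..} (\<lambda>t. integral\<^sup>L (restrict_atMost \<tau> (\<zeta> t)) f)" if f: "bcont f" "\<forall>x. f x \<ge> 0" for f
  proof (rule mono_onI)
    fix s t :: real assume st: "s \<in> {0..}" "t \<in> {0..}" "s \<le> t"
    then show "integral\<^sup>L (restrict_atMost \<tau> (\<zeta> s)) f \<le> integral\<^sup>L (restrict_atMost \<tau> (\<zeta> t)) f"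
      using cadlag_M_up_integral_atMost_mono[OF c _ st(3) f(1), of \<tau>] f(2)
      by (simp add: integral_restrict_atMost cadlag_M_up_fin_meas[OF c] bcont_measurable[OF f(1)])
  qed
  moreover have "cadlag_M \<zeta>" using c unfolding cadlag_M_up_def by blast
  ultimately show ?thesis using cadlag_M_restrict_atMost[OF _ \<tau> dom] unfolding cadlag_M_up_def by blast
qed

lemma cadlag_fun_total_mass:
  assumes c: "cadlag_M \<zeta>"
  shows "cadlag_fun (\<lambda>t. measure (\<zeta> t) UNIV)"
proof -
  have fin: "\<And>t. t \<ge> 0 \<Longrightarrow> fin_meas (\<zeta> t)" and
    rt: "\<And>t. t \<ge> 0 \<Longrightarrow> weak_tendsto \<zeta> (\<zeta> t) (at_right t)" and
    lt: "\<And>t. t > 0 \<Longrightarrow> \<exists>\<nu>. fin_meas \<nu> \<and> weak_tendsto \<zeta> \<nu> (at_left t)"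
    using c unfolding cadlag_M_def by auto
  have "continuous (at_right t) (\<lambda>t. measure (\<zeta> t) UNIV)" if t: "t \<ge> 0" for t
  proof -
    have "\<forall>\<^sub>F s in at_right t. fin_meas (\<zeta> s)"
      using eventually_at_right_less[of t] by eventually_elim (use fin t in auto)
    then show ?thesis
      using weak_tendsto_total_mass[OF rt[OF t] _ fin[OF t]] by (simp add: continuous_within)
  qed
  moreover have "\<exists>l. ((\<lambda>t. measure (\<zeta> t) UNIV) \<longlongrightarrow> l) (at_left t)" if t: "t > 0" for t
  proof -
    obtain \<nu> where \<nu>: "fin_meas \<nu>" "weak_tendsto \<zeta> \<nu> (at_left t)" using lt[OF t] by blast
    have "\<forall>\<^sub>F s in at_left t. fin_meas (\<zeta> s)"
      using eventually_at_left_real[OF t] by eventually_elim (use fin in auto)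
    then show ?thesis using weak_tendsto_total_mass[OF \<nu>(2) _ \<nu>(1)] by blast
  qed
  ultimately show ?thesis unfolding cadlag_fun_def by blast
qed

lemma continuous_at_right_measure_Ioi:
  assumes c: "cadlag_M_up \<zeta>" and t: "t \<ge> 0"
  shows "continuous (at_right t) (\<lambda>s. measure (\<zeta> s) {x<..})"
proof -
  have fin: "\<And>t. t \<ge> 0 \<Longrightarrow> fin_meas (\<zeta> t)" and
    rt: "\<And>t. t \<ge> 0 \<Longrightarrow> weak_tendsto \<zeta> (\<zeta> t) (at_right t)"
    using c unfolding cadlag_M_up_def cadlag_M_def by auto
  have evf: "\<forall>\<^sub>F s in at_right t. fin_meas (\<zeta> s) \<and> t < s"
    using eventually_at_right_less[of t] by eventually_elim (use fin t in auto)
  then have "\<forall>\<^sub>F s in at_right t. fin_meas (\<zeta> s)" by (rule eventually_mono) auto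
  then have "((\<lambda>s. measure (\<zeta> s) UNIV) \<longlongrightarrow> measure (\<zeta> t) UNIV) (at_right t)"
    by (rule weak_tendsto_total_mass[OF rt[OF t] _ fin[OF t]])
  then have upper: "((\<lambda>s. measure (\<zeta> s) UNIV - measure (\<zeta> t) {..x}) \<longlongrightarrow> measure (\<zeta> t) {x<..}) (at_right t)"
    using tendsto_diff[OF _ tendsto_const[of "measure (\<zeta> t) {..x}"]] fin_meas_measure_Ioi[OF fin[OF t], of x]
    by simp
  have "((\<lambda>s. measure (\<zeta> s) {x<..}) \<longlongrightarrow> measure (\<zeta> t) {x<..}) (at_right t)"
  proof (rule tendsto_sandwich[OF _ _ tendsto_const upper])
    show "\<forall>\<^sub>F s in at_right t. measure (\<zeta> t) {x<..} \<le> measure (\<zeta> s) {x<..}"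
      using evf by eventually_elim (use cadlag_M_up_measure_mono(2)[OF c t] in auto)
    show "\<forall>\<^sub>F s in at_right t. measure (\<zeta> s) {x<..} \<le> measure (\<zeta> s) UNIV - measure (\<zeta> t) {..x}"
      using evf by eventually_elim (use cadlag_M_up_measure_mono(1)[OF c t] fin_meas_measure_Ioi in \<open>fastforce\<close>)
  qed
  then show ?thesis by (simp add: continuous_within)
qed

lemma cadlag_M_up_ext_zero_measure_Ioi_mono:
  assumes c: "cadlag_M_up \<zeta>" and "x \<le> y"
  shows "ext_zero (\<lambda>s. measure (\<zeta> s) {a<..}) x \<le> ext_zero (\<lambda>s. measure (\<zeta> s) {a<..}) y"
  using assms cadlag_M_up_measure_mono(2)[OF c]
  by (intro ext_zero_mono mono_onI) auto

lemma cadlag_M_up_ext_zero_measure_Ioi_continuous: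
  "cadlag_M_up \<zeta> \<Longrightarrow> continuous (at_right t) (ext_zero (\<lambda>s. measure (\<zeta> s) {a<..}))"
  by (intro continuous_at_right_ext_zero continuous_at_right_measure_Ioi)

lemma cadlag_fun_cong:
  assumes "cadlag_fun f" "\<And>t. t \<ge> 0 \<Longrightarrow> f t = g t"
  shows "cadlag_fun g"
proof -
  have "continuous (at_right t) g" if t: "t \<ge> 0" for t
  proof -
    have "(f \<longlongrightarrow> f t) (at_right t)" using assms(1) t by (simp add: cadlag_fun_def continuous_within)
    moreover have "\<forall>\<^sub>F s in at_right t. f s = g s"
      using eventually_at_right_less[of t] by eventually_elim (use t assms(2) in auto)
    ultimately have "(g \<longlongrightarrow> f t) (at_right t)" by (rule Lim_transform_eventually)
    then show ?thesis using assms(2)[OF t] by (simp add: continuous_within)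
  qed
  moreover have "\<exists>l. (g \<longlongrightarrow> l) (at_left t)" if t: "t > 0" for t
  proof -
    obtain l where "(f \<longlongrightarrow> l) (at_left t)" using assms(1) t by (auto simp: cadlag_fun_def)
    moreover have "\<forall>\<^sub>F s in at_left t. f s = g s"
      using eventually_at_left_real[OF t] by eventually_elim (use assms(2) in auto)
    ultimately show ?thesis using Lim_transform_eventually by blast
  qed
  ultimately show ?thesis by (simp add: cadlag_fun_def)
qed

lemma cadlag_fun_add:
  assumes f: "cadlag_fun f" and g: "cadlag_fun g" shows "cadlag_fun (\<lambda>t. f t + g t)"
  unfolding cadlag_fun_def
proof (intro conjI allI impI)
  fix t :: real assume "t \<ge> 0"
  then show "continuous (at_right t) (\<lambda>t. f t + g t)"
    using f g unfolding cadlag_fun_def by (simp add: continuous_add)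
next
  fix t :: real assume "t > 0"
  then obtain l1 l2 where "(f \<longlongrightarrow> l1) (at_left t)" "(g \<longlongrightarrow> l2) (at_left t)"
    using f g unfolding cadlag_fun_def by blast
  then show "\<exists>l. ((\<lambda>t. f t + g t) \<longlongrightarrow> l) (at_left t)" using tendsto_add by blast
qed

lemma cadlag_fun_diff:
  assumes f: "cadlag_fun f" and g: "cadlag_fun g" shows "cadlag_fun (\<lambda>t. f t - g t)"
  unfolding cadlag_fun_def
proof (intro conjI allI impI)
  fix t :: real assume "t \<ge> 0"
  then show "continuous (at_right t) (\<lambda>t. f t - g t)"
    using f g unfolding cadlag_fun_def by (simp add: continuous_diff)
next
  fix t :: real assume "t > 0"
  then obtain l1 l2 where "(f \<longlongrightarrow> l1) (at_left t)" "(g \<longlongrightarrow> l2) (at_left t)"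
    using f g unfolding cadlag_fun_def by blast
  then show "\<exists>l. ((\<lambda>t. f t - g t) \<longlongrightarrow> l) (at_left t)" using tendsto_diff by blast
qed

lemma cadlag_fun_stopped:
  assumes f: "cadlag_fun f" and \<tau>: "\<tau> \<ge> 0"
  shows "cadlag_fun (\<lambda>t. f (min t \<tau>))"
proof -
  have "continuous (at_right t) (\<lambda>t. f (min t \<tau>))" if t: "t \<ge> 0" for t
  proof (cases "t < \<tau>")
    case True
    have "(f \<longlongrightarrow> f t) (at_right t)" using f t by (simp add: cadlag_fun_def continuous_within)
    moreover have "\<forall>\<^sub>F s in at_right t. f s = f (min s \<tau>)"
      using eventually_at_right_real[OF True] by eventually_elim auto
    ultimately have "((\<lambda>t. f (min t \<tau>)) \<longlongrightarrow> f t) (at_right t)" by (rule Lim_transform_eventually)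
    then show ?thesis using True by (simp add: continuous_within)
  next
    case False
    have "\<forall>\<^sub>F s in at_right t. f \<tau> = f (min s \<tau>)"
      using eventually_at_right_less[of t] by eventually_elim (use False in auto)
    then have "((\<lambda>t. f (min t \<tau>)) \<longlongrightarrow> f \<tau>) (at_right t)" by (rule Lim_transform_eventually[OF tendsto_const])
    then show ?thesis using False by (simp add: continuous_within)
  qed
  moreover have "\<exists>l. ((\<lambda>t. f (min t \<tau>)) \<longlongrightarrow> l) (at_left t)" if t: "t > 0" for t
  proof (cases "t \<le> \<tau>")
    case True
    obtain l where l: "(f \<longlongrightarrow> l) (at_left t)" using f t by (auto simp: cadlag_fun_def)
    have "\<forall>\<^sub>F s in at_left t. f s = f (min s \<tau>)"
      using eventually_at_left_real[OF t] by eventually_elim (use True in auto)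
    then have "((\<lambda>t. f (min t \<tau>)) \<longlongrightarrow> l) (at_left t)" by (rule Lim_transform_eventually[OF l])
    then show ?thesis by blast
  next
    case False
    have "\<forall>\<^sub>F s in at_left t. f \<tau> = f (min s \<tau>)"
      using eventually_at_left_real[of \<tau> t] False by (auto elim: eventually_mono)
    then have "((\<lambda>t. f (min t \<tau>)) \<longlongrightarrow> f \<tau>) (at_left t)" by (rule Lim_transform_eventually[OF tendsto_const])
    then show ?thesis by blast
  qed
  ultimately show ?thesis by (simp add: cadlag_fun_def)
qed

section \<open>Freezing a solution at a deadline\<close>

locale hard_EDF_solution =
  fixes \<alpha> :: "real \<Rightarrow> real measure" and \<mu> :: "real \<Rightarrow> real"
    and \<xi> \<beta> \<beta>s \<beta>r :: "real \<Rightarrow> real measure" and \<rho> \<iota> :: "real \<Rightarrow> real"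
  assumes cadlag_xi: "cadlag_M \<xi>" and cadlag_beta: "cadlag_M_up \<beta>"
    and cadlag_beta_s: "cadlag_M_up \<beta>s" and cadlag_beta_r: "cadlag_M_up \<beta>r"
    and nonneg_nondec_cadlag_rho: "nonneg_nondec_cadlag \<rho>" and nonneg_nondec_cadlag_iota: "nonneg_nondec_cadlag \<iota>"
    and beta_split: "\<And>t B. t \<ge> 0 \<Longrightarrow> B \<in> sets borel \<Longrightarrow>
      emeasure (\<beta> t) B = emeasure (\<beta>s t) B + emeasure (\<beta>r t) B"
    and iota_eq: "\<And>t. t \<ge> 0 \<Longrightarrow> \<iota> t = \<mu> t - measure (\<beta>s t) {0..}"
    and beta_r_future: "\<And>t. t \<ge> 0 \<Longrightarrow> emeasure (\<beta>r t) {t<..} = 0"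
    and xi_eq: "\<And>t x. t \<ge> 0 \<Longrightarrow> x \<ge> 0 \<Longrightarrow>
      measure (\<xi> t) {0..x} = measure (\<alpha> t) {0..x} - measure (\<beta> t) {0..x}"
    and non_idling: "\<And>x. x \<ge> 0 \<Longrightarrow>
      (\<integral>\<^sup>+ t\<in>{0..}. ennreal (measure (\<xi> t) {0..x}) \<partial>stieltjes \<iota>) = 0"
    and edf: "\<And>x. x \<ge> 0 \<Longrightarrow>
      (\<integral>\<^sup>+ t\<in>{0..}. ennreal (measure (\<xi> t) {0..x}) \<partial>stieltjes (\<lambda>s. measure (\<beta> s) {x<..})) = 0"
    and rho_eq: "\<And>t. t \<ge> 0 \<Longrightarrow> \<rho> t = measure (\<beta>r t) {0..t}"
    and rho_eq_total: "\<And>t. t \<ge> 0 \<Longrightarrow> \<rho> t = measure (\<beta>r t) {0..}"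
    and xi_overdue: "\<And>t. t \<ge> 0 \<Longrightarrow> emeasure (\<xi> t) {0..<t} = 0"
    and rho_only_late:
      "(\<integral>\<^sup>+ t\<in>{0..}. (if inf_supp (\<xi> t) > ereal t then 1 else 0) \<partial>stieltjes \<rho>) = 0"

lemma hard_EDF_FME_iff_solution:
  "hard_EDF_FME \<alpha> \<mu> \<xi> \<beta> \<beta>s \<beta>r \<rho> \<iota> \<longleftrightarrow> hard_EDF_solution \<alpha> \<mu> \<xi> \<beta> \<beta>s \<beta>r \<rho> \<iota>"
  unfolding hard_EDF_FME_def hard_EDF_solution_def by auto

locale deadline_truncation = hard_EDF_solution +
  fixes \<tau> :: real and \<xi>0 :: "real measure" and \<alpha>h a :: "real \<Rightarrow> real measure"
  assumes tau_pos: "\<tau> > 0"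
    and atomless_xi0: "atomless_meas \<xi>0" and alpha_hat: "cont_M_atomless_up \<alpha>h"
    and sets_alpha: "\<And>t. t \<ge> 0 \<Longrightarrow> sets (\<alpha> t) = sets borel"
    and alpha_split: "\<And>t B. t \<ge> 0 \<Longrightarrow> B \<in> sets borel \<Longrightarrow>
      emeasure (\<alpha> t) B = emeasure \<xi>0 B + emeasure (\<alpha>h t) B"
    and alpha_hat_eq: "\<And>t B. t \<ge> 0 \<Longrightarrow> B \<in> sets borel \<Longrightarrow>
      emeasure (\<alpha>h t) B = (\<integral>\<^sup>+ s\<in>{0..t}. emeasure (a s) B \<partial>lborel)"
    and fin_meas_a: "\<And>t. t \<ge> 0 \<Longrightarrow> fin_meas (a t)"
    and a_no_past_deadlines: "\<And>t. t \<ge> 0 \<Longrightarrow> emeasure (a t) {..<t} = 0"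
begin

lemma tau_nonneg: "\<tau> \<ge> 0"
  using tau_pos by simp

lemma fin_meas_xi: "t \<ge> 0 \<Longrightarrow> fin_meas (\<xi> t)"
  using cadlag_xi by (rule cadlag_M_fin_meas)

lemma fin_meas_beta: "t \<ge> 0 \<Longrightarrow> fin_meas (\<beta> t)"
  using cadlag_beta by (rule cadlag_M_up_fin_meas)

lemma fin_meas_beta_s: "t \<ge> 0 \<Longrightarrow> fin_meas (\<beta>s t)"
  using cadlag_beta_s by (rule cadlag_M_up_fin_meas)

lemma fin_meas_beta_r: "t \<ge> 0 \<Longrightarrow> fin_meas (\<beta>r t)"
  using cadlag_beta_r by (rule cadlag_M_up_fin_meas)

lemma fin_meas_alpha_hat: "t \<ge> 0 \<Longrightarrow> fin_meas (\<alpha>h t)"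
  using alpha_hat unfolding cont_M_atomless_up_def atomless_meas_def by auto

lemma fin_meas_alpha: "t \<ge> 0 \<Longrightarrow> fin_meas (\<alpha> t)"
  using alpha_split[of t UNIV] alpha_split[of t "{..<0}"] atomless_xi0 fin_meas_alpha_hat[of t] sets_alpha[of t]
  unfolding fin_meas_def atomless_meas_def by auto

lemma alpha_no_atom: "t \<ge> 0 \<Longrightarrow> emeasure (\<alpha> t) {c} = 0"
  using alpha_split[of t "{c}"] atomless_xi0 alpha_hat
  unfolding cont_M_atomless_up_def atomless_meas_def by auto

lemma measure_alpha_split:
  assumes t: "t \<ge> 0" and B: "B \<in> sets borel"
  shows "measure (\<alpha> t) B = measure \<xi>0 B + measure (\<alpha>h t) B"
proof -
  have "fin_meas \<xi>0" using atomless_xi0 by (simp add: atomless_meas_def)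
  then have "ennreal (measure (\<alpha> t) B) = ennreal (measure \<xi>0 B) + ennreal (measure (\<alpha>h t) B)"
    using alpha_split[OF t B] fin_meas_emeasure_eq_measure fin_meas_alpha[OF t] fin_meas_alpha_hat[OF t]
    by metis
  then show ?thesis by (simp add: ennreal_plus[symmetric] del: ennreal_plus)
qed

lemma alpha_mono:
  assumes st: "0 \<le> s" "s \<le> t" and B: "B \<in> sets borel"
  shows "measure (\<alpha> s) B \<le> measure (\<alpha> t) B"
proof -
  have "(\<integral>\<^sup>+ x\<in>{0..s}. emeasure (a x) B \<partial>lborel) \<le> (\<integral>\<^sup>+ x\<in>{0..t}. emeasure (a x) B \<partial>lborel)"
    by (rule nn_integral_mono) (use st in \<open>auto simp: indicator_def\<close>)
  then have "emeasure (\<alpha> s) B \<le> emeasure (\<alpha> t) B"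
    using alpha_split[of _ B] alpha_hat_eq[of _ B] st B by (auto intro: add_left_mono)
  then show ?thesis
    using fin_meas_emeasure_eq_measure[OF fin_meas_alpha, of s B] fin_meas_emeasure_eq_measure[OF fin_meas_alpha, of t B] st
    by simp
qed

lemma alpha_frozen_after_tau:
  assumes y: "0 \<le> y" "y \<le> \<tau>" "\<tau> \<le> t"
  shows "measure (\<alpha> t) {0..y} = measure (\<alpha> \<tau>) {0..y}"
proof -
  have "(\<integral>\<^sup>+ s\<in>{0..t}. emeasure (a s) {0..y} \<partial>lborel) = (\<integral>\<^sup>+ s\<in>{0..\<tau>}. emeasure (a s) {0..y} \<partial>lborel)"
  proof (rule nn_integral_cong)
    fix s :: real
    show "emeasure (a s) {0..y} * indicator {0..t} s = emeasure (a s) {0..y} * indicator {0..\<tau>} s"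
    proof (cases "\<tau> < s \<and> s \<le> t")
      case True
      then have s0: "s \<ge> 0" using tau_pos by simp
      have "emeasure (a s) {0..y} \<le> emeasure (a s) {..<s}"
        by (rule emeasure_mono) (use True y fin_meas_a[OF s0] in \<open>auto simp: fin_meas_sets\<close>)
      then show ?thesis using a_no_past_deadlines[OF s0] by simp
    next
      case False
      then show ?thesis using y by (auto simp: indicator_def)
    qed
  qed
  then have "emeasure (\<alpha> t) {0..y} = emeasure (\<alpha> \<tau>) {0..y}"
    using alpha_split alpha_hat_eq y tau_nonneg by simp
  then show ?thesis by (simp add: measure_def)
qed

lemma measure_beta_split:
  "t \<ge> 0 \<Longrightarrow> B \<in> sets borel \<Longrightarrow> measure (\<beta> t) B = measure (\<beta>s t) B + measure (\<beta>r t) B"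
  using beta_split[of t B] fin_meas_emeasure_eq_measure[OF fin_meas_beta, of t B]
    fin_meas_emeasure_eq_measure[OF fin_meas_beta_s, of t B] fin_meas_emeasure_eq_measure[OF fin_meas_beta_r, of t B]
  by (simp add: ennreal_plus[symmetric] del: ennreal_plus)

lemma measure_xi_Ioc:
  assumes t: "t \<ge> 0" and pq: "0 \<le> p" "p \<le> q"
  shows "measure (\<xi> t) {p<..q} = measure (\<alpha> t) {p<..q} - measure (\<beta> t) {p<..q}"
  using xi_eq[OF t, of p] xi_eq[OF t, of q] pq fin_meas_measure_Ioc[OF fin_meas_xi[OF t] pq]
    fin_meas_measure_Ioc[OF fin_meas_alpha[OF t] pq] fin_meas_measure_Ioc[OF fin_meas_beta[OF t] pq]
  by simp

lemma beta_le_alpha: "t \<ge> 0 \<Longrightarrow> 0 \<le> p \<Longrightarrow> p \<le> q \<Longrightarrow> measure (\<beta> t) {p<..q} \<le> measure (\<alpha> t) {p<..q}"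
  using measure_xi_Ioc[of t p q] measure_nonneg[of "\<xi> t" "{p<..q}"] by linarith

lemma xi_le_alpha: "t \<ge> 0 \<Longrightarrow> 0 \<le> p \<Longrightarrow> p \<le> q \<Longrightarrow> measure (\<xi> t) {p<..q} \<le> measure (\<alpha> t) {p<..q}"
  using measure_xi_Ioc[of t p q] measure_nonneg[of "\<beta> t" "{p<..q}"] by linarith

lemma beta_s_le_alpha:
  assumes "t \<ge> 0" "0 \<le> p" "p \<le> q"
  shows "measure (\<beta>s t) {p<..q} \<le> measure (\<alpha> t) {p<..q}"
proof -
  have "measure (\<beta> t) {p<..q} = measure (\<beta>s t) {p<..q} + measure (\<beta>r t) {p<..q}"
    using measure_beta_split assms(1) by simp
  then show ?thesis using measure_nonneg[of "\<beta>r t" "{p<..q}"] beta_le_alpha[OF assms] by linarith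
qed

lemma atomless_dominated_stopped:
  assumes le: "\<And>s p q. s \<ge> 0 \<Longrightarrow> 0 \<le> p \<Longrightarrow> p \<le> q \<Longrightarrow> measure (\<zeta> s) {p<..q} \<le> measure (\<alpha> s) {p<..q}"
  shows "atomless_dominated (\<lambda>t. \<zeta> (min t \<tau>)) \<tau>"
  unfolding atomless_dominated_def
proof (intro allI impI)
  fix T :: real assume T: "T \<ge> 0"
  show "\<exists>L. fin_meas L \<and> emeasure L {\<tau>} = 0 \<and> (\<forall>s\<in>{0..T}. \<forall>p q. 0 \<le> p \<longrightarrow> p \<le> q \<longrightarrow>
          measure (\<zeta> (min s \<tau>)) {p<..q} \<le> measure L {p<..q})"
  proof (intro exI conjI ballI allI impI)
    show "fin_meas (\<alpha> T)" "emeasure (\<alpha> T) {\<tau>} = 0" using fin_meas_alpha[OF T] alpha_no_atom[OF T] .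
    fix s p q :: real assume s: "s \<in> {0..T}" and pq: "0 \<le> p" "p \<le> q"
    have "measure (\<zeta> (min s \<tau>)) {p<..q} \<le> measure (\<alpha> (min s \<tau>)) {p<..q}"
      using le[of "min s \<tau>" p q] s pq tau_pos by simp
    also have "\<dots> \<le> measure (\<alpha> T) {p<..q}"
      by (rule alpha_mono) (use s tau_pos in auto)
    finally show "measure (\<zeta> (min s \<tau>)) {p<..q} \<le> measure (\<alpha> T) {p<..q}" .
  qed
qed

text \<open>\<open>\<beta>r\<close> needs no cut at \<open>\<tau>\<close>: up to time \<open>\<tau>\<close> only work with deadline \<open>\<le> \<tau>\<close> reneges.\<close>

definition "xi_circ t = restrict_atMost \<tau> (\<xi> (min t \<tau>))"
definition "beta_circ t = restrict_atMost \<tau> (\<beta> (min t \<tau>))"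
definition "beta_s_circ t = restrict_atMost \<tau> (\<beta>s (min t \<tau>))"
definition "beta_r_circ t = \<beta>r (min t \<tau>)"
definition "rho_circ t = \<rho> (min t \<tau>)"
definition "iota_circ t = \<mu> t - measure (beta_s_circ t) {0..}"

lemma Icc_inter_atMost: "{..\<tau>} \<inter> {0..x} = {0..min x \<tau>}"
  by auto

lemma measure_xi_circ: "t \<ge> 0 \<Longrightarrow> measure (xi_circ t) {0..x} = measure (\<xi> (min t \<tau>)) {0..min x \<tau>}"
  unfolding xi_circ_def using fin_meas_xi[of "min t \<tau>"] tau_pos
  by (subst measure_restrict_atMost) (auto simp: Icc_inter_atMost min.commute)

lemma measure_beta_circ: "t \<ge> 0 \<Longrightarrow> measure (beta_circ t) {0..x} = measure (\<beta> (min t \<tau>)) {0..min x \<tau>}"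
  unfolding beta_circ_def using fin_meas_beta[of "min t \<tau>"] tau_pos
  by (subst measure_restrict_atMost) (auto simp: Icc_inter_atMost min.commute)

lemma measure_beta_s_circ: "t \<ge> 0 \<Longrightarrow> measure (beta_s_circ t) {0..x} = measure (\<beta>s (min t \<tau>)) {0..min x \<tau>}"
  unfolding beta_s_circ_def using fin_meas_beta_s[of "min t \<tau>"] tau_pos
  by (subst measure_restrict_atMost) (auto simp: Icc_inter_atMost min.commute)

lemma fin_meas_beta_s_circ: "t \<ge> 0 \<Longrightarrow> fin_meas (beta_s_circ t)"
  unfolding beta_s_circ_def using fin_meas_beta_s[of "min t \<tau>"] tau_pos by (intro fin_meas_restrict_atMost) simp

lemma cadlag_xi_circ: "cadlag_M xi_circ"
  unfolding xi_circ_def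
  by (rule cadlag_M_restrict_atMost[OF cadlag_M_stopped[OF cadlag_xi tau_nonneg] tau_pos
        atomless_dominated_stopped[OF xi_le_alpha]])

lemma cadlag_beta_circ: "cadlag_M_up beta_circ"
  unfolding beta_circ_def
  by (rule cadlag_M_up_restrict_atMost[OF cadlag_M_up_stopped[OF cadlag_beta tau_nonneg] tau_pos
        atomless_dominated_stopped[OF beta_le_alpha]])

lemma cadlag_beta_s_circ: "cadlag_M_up beta_s_circ"
  unfolding beta_s_circ_def
  by (rule cadlag_M_up_restrict_atMost[OF cadlag_M_up_stopped[OF cadlag_beta_s tau_nonneg] tau_pos
        atomless_dominated_stopped[OF beta_s_le_alpha]])

lemma cadlag_beta_r_circ: "cadlag_M_up beta_r_circ"
  unfolding beta_r_circ_def by (rule cadlag_M_up_stopped[OF cadlag_beta_r tau_nonneg])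

text \<open>The queue at time \<open>\<tau>\<close> holds no work with deadline \<open>\<le> \<tau>\<close>: overdue work has left, and
  there is no mass exactly at \<open>\<tau>\<close> because \<open>\<xi>\<^sub>\<tau> \<le> \<alpha>\<^sub>\<tau>\<close> has no atoms.\<close>

lemma emeasure_xi_tau_upto_tau: "emeasure (\<xi> \<tau>) {0..\<tau>} = 0"
proof -
  have atom: "emeasure (\<xi> \<tau>) {\<tau>} = 0"
    by (rule fin_meas_no_atom_if_locally_dominated[OF fin_meas_xi[OF tau_nonneg]
          fin_meas_alpha[OF tau_nonneg] alpha_no_atom[OF tau_nonneg] tau_pos])
      (auto intro: xi_le_alpha[OF tau_nonneg])
  have u: "{0..\<tau>} = {0..<\<tau>} \<union> {\<tau>}" using tau_pos by auto
  have "emeasure (\<xi> \<tau>) {0..\<tau>} \<le> emeasure (\<xi> \<tau>) {0..<\<tau>} + emeasure (\<xi> \<tau>) {\<tau>}"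
    unfolding u by (rule emeasure_subadditive) (use fin_meas_xi[OF tau_nonneg] in \<open>auto simp: fin_meas_sets\<close>)
  then show ?thesis using xi_overdue[OF tau_nonneg] atom by simp
qed

lemma measure_xi_circ_after_tau: "t \<ge> \<tau> \<Longrightarrow> measure (xi_circ t) {0..x} = 0"
proof -
  assume t: "t \<ge> \<tau>"
  have "emeasure (\<xi> \<tau>) {0..min x \<tau>} \<le> emeasure (\<xi> \<tau>) {0..\<tau>}"
    by (rule emeasure_mono) (use fin_meas_xi[OF tau_nonneg] in \<open>auto simp: fin_meas_sets\<close>)
  then show ?thesis
    using measure_xi_circ[of t x] emeasure_xi_tau_upto_tau t tau_pos by (simp add: measure_def)
qed

lemma measure_beta_r_above_tau: "0 \<le> s \<Longrightarrow> s \<le> \<tau> \<Longrightarrow> emeasure (\<beta>r s) ({\<tau><..} \<inter> B) = 0"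
proof -
  assume s: "0 \<le> s" "s \<le> \<tau>"
  have "emeasure (\<beta>r s) ({\<tau><..} \<inter> B) \<le> emeasure (\<beta>r s) {s<..}"
    by (rule emeasure_mono) (use s fin_meas_beta_r[OF s(1)] in \<open>auto simp: fin_meas_sets\<close>)
  then show ?thesis using beta_r_future[OF s(1)] by simp
qed

lemma emeasure_beta_r_atMost_tau:
  assumes s: "0 \<le> s" "s \<le> \<tau>" and B: "B \<in> sets borel"
  shows "emeasure (\<beta>r s) ({..\<tau>} \<inter> B) = emeasure (\<beta>r s) B"
proof -
  have sb: "sets (\<beta>r s) = sets borel" using fin_meas_beta_r[OF s(1)] by (simp add: fin_meas_sets)
  have eq: "B = ({..\<tau>} \<inter> B) \<union> ({\<tau><..} \<inter> B)" by auto
  have "emeasure (\<beta>r s) B = emeasure (\<beta>r s) ({..\<tau>} \<inter> B) + emeasure (\<beta>r s) ({\<tau><..} \<inter> B)"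
    by (subst eq, rule plus_emeasure[symmetric]) (use B sb in auto)
  then show ?thesis using measure_beta_r_above_tau[OF s] by simp
qed

lemma measure_truncate_data:
  assumes t: "t \<ge> 0"
  shows "measure (truncate_data \<alpha> \<tau> t) {0..x} = measure (\<alpha> t) {0..min x \<tau>}"
proof -
  have "emeasure (truncate_data \<alpha> \<tau> t) {0..x} = emeasure (\<alpha> t) ({0..\<tau>} \<inter> {0..x})"
    unfolding truncate_data_def by (rule emeasure_restricted) (use sets_alpha t in auto)
  also have "{0..\<tau>} \<inter> {0..x} = {0..min x \<tau>}" by auto
  finally show ?thesis by (simp add: measure_def)
qed

lemma beta_circ_split:
  assumes t: "t \<ge> 0" and B: "B \<in> sets borel"
  shows "emeasure (beta_circ t) B = emeasure (beta_s_circ t) B + emeasure (beta_r_circ t) B"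
proof -
  let ?s = "min t \<tau>"
  have s: "0 \<le> ?s" "?s \<le> \<tau>" using t tau_pos by auto
  have "emeasure (beta_circ t) B = emeasure (\<beta> ?s) ({..\<tau>} \<inter> B)"
    unfolding beta_circ_def by (rule emeasure_restrict_atMost[OF fin_meas_beta[OF s(1)] B])
  also have "\<dots> = emeasure (\<beta>s ?s) ({..\<tau>} \<inter> B) + emeasure (\<beta>r ?s) ({..\<tau>} \<inter> B)"
    by (rule beta_split) (use s B in auto)
  also have "emeasure (\<beta>s ?s) ({..\<tau>} \<inter> B) = emeasure (beta_s_circ t) B"
    unfolding beta_s_circ_def by (rule emeasure_restrict_atMost[OF fin_meas_beta_s[OF s(1)] B, symmetric])
  also have "emeasure (\<beta>r ?s) ({..\<tau>} \<inter> B) = emeasure (beta_r_circ t) B"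
    unfolding beta_r_circ_def by (rule emeasure_beta_r_atMost_tau[OF s B])
  finally show ?thesis .
qed

lemma beta_r_circ_future: "t \<ge> 0 \<Longrightarrow> emeasure (beta_r_circ t) {t<..} = 0"
proof -
  assume t: "t \<ge> 0"
  have "emeasure (\<beta>r (min t \<tau>)) {t<..} \<le> emeasure (\<beta>r (min t \<tau>)) {min t \<tau><..}"
    by (rule emeasure_mono) (use fin_meas_beta_r[of "min t \<tau>"] t tau_pos in \<open>auto simp: fin_meas_sets\<close>)
  then show ?thesis unfolding beta_r_circ_def using beta_r_future[of "min t \<tau>"] t tau_pos by simp
qed

lemma xi_circ_eq:
  assumes t: "t \<ge> 0" and x: "x \<ge> 0"
  shows "measure (xi_circ t) {0..x} = measure (truncate_data \<alpha> \<tau> t) {0..x} - measure (beta_circ t) {0..x}"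
proof -
  have "measure (\<alpha> t) {0..min x \<tau>} = measure (\<alpha> (min t \<tau>)) {0..min x \<tau>}"
    using alpha_frozen_after_tau[of "min x \<tau>" t] x tau_pos by (cases "t \<le> \<tau>") auto
  then show ?thesis
    unfolding measure_xi_circ[OF t] measure_beta_circ[OF t] measure_truncate_data[OF t]
    using xi_eq[of "min t \<tau>" "min x \<tau>"] t x tau_pos by simp
qed

lemma rho_circ_eq: "t \<ge> 0 \<Longrightarrow> rho_circ t = measure (beta_r_circ t) {0..t}"
  and rho_circ_eq_total: "t \<ge> 0 \<Longrightarrow> rho_circ t = measure (beta_r_circ t) {0..}"
proof -
  assume t: "t \<ge> 0"
  let ?s = "min t \<tau>"
  have s: "?s \<ge> 0" using t tau_pos by simp
  have "measure (\<beta>r ?s) {0..?s} \<le> measure (\<beta>r ?s) {0..t}" "measure (\<beta>r ?s) {0..t} \<le> measure (\<beta>r ?s) {0..}"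
    by (auto intro: fin_meas_measure_mono[OF fin_meas_beta_r[OF s]])
  then show "rho_circ t = measure (beta_r_circ t) {0..t}" "rho_circ t = measure (beta_r_circ t) {0..}"
    unfolding rho_circ_def beta_r_circ_def using rho_eq[OF s] rho_eq_total[OF s] by linarith+
qed

lemma xi_circ_overdue: "t \<ge> 0 \<Longrightarrow> emeasure (xi_circ t) {0..<t} = 0"
proof -
  assume t: "t \<ge> 0"
  let ?s = "min t \<tau>"
  have s: "?s \<ge> 0" using t tau_pos by simp
  have e: "emeasure (xi_circ t) {0..<t} = emeasure (\<xi> ?s) ({..\<tau>} \<inter> {0..<t})"
    unfolding xi_circ_def by (rule emeasure_restrict_atMost[OF fin_meas_xi[OF s]]) simp
  show ?thesis
  proof (cases "t \<le> \<tau>")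
    case True
    have "emeasure (\<xi> t) ({..\<tau>} \<inter> {0..<t}) \<le> emeasure (\<xi> t) {0..<t}"
      by (rule emeasure_mono) (use fin_meas_xi[OF t] in \<open>auto simp: fin_meas_sets\<close>)
    then show ?thesis using e xi_overdue[OF t] True by simp
  next
    case False
    have "emeasure (\<xi> \<tau>) ({..\<tau>} \<inter> {0..<t}) \<le> emeasure (\<xi> \<tau>) {0..\<tau>}"
      by (rule emeasure_mono) (use fin_meas_xi[OF tau_nonneg] in \<open>auto simp: fin_meas_sets\<close>)
    then show ?thesis using e emeasure_xi_tau_upto_tau False by simp
  qed
qed

lemma nonneg_nondec_cadlag_rho_circ: "nonneg_nondec_cadlag rho_circ"
proof -
  have r: "cadlag_fun \<rho>" "mono_on {0..} \<rho>" "\<And>t. t \<ge> 0 \<Longrightarrow> \<rho> t \<ge> 0"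
    using nonneg_nondec_cadlag_rho unfolding nonneg_nondec_cadlag_def by auto
  have "cadlag_fun rho_circ"
    using cadlag_fun_stopped[OF r(1) tau_nonneg] by (simp add: rho_circ_def[abs_def])
  moreover have "mono_on {0..} rho_circ"
    by (rule mono_onI) (use tau_pos in \<open>auto simp: rho_circ_def intro!: mono_onD[OF r(2)]\<close>)
  ultimately show ?thesis unfolding nonneg_nondec_cadlag_def rho_circ_def using r(3) tau_pos by simp
qed

text \<open>Service of deadlines beyond \<open>\<tau>\<close>, and all capacity after time \<open>\<tau>\<close>, counts as idleness in \<open>\<iota>\<^sup>\<circ>\<close>.\<close>

lemma iota_circ_eq:
  assumes t: "t \<ge> 0"
  shows "iota_circ t = \<iota> t + measure (\<beta>s t) UNIV - measure (\<beta>s (min t \<tau>)) {..\<tau>}"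
proof -
  have "measure (beta_s_circ t) UNIV = measure (\<beta>s (min t \<tau>)) {..\<tau>}"
    unfolding beta_s_circ_def using fin_meas_beta_s[of "min t \<tau>"] t tau_pos
    by (subst measure_restrict_atMost) auto
  then show ?thesis
    unfolding iota_circ_def using iota_eq[OF t] fin_meas_measure_atLeast0[OF fin_meas_beta_s[OF t]]
      fin_meas_measure_atLeast0[OF fin_meas_beta_s_circ[OF t]] by simp
qed

lemma iota_circ_before_tau: "0 \<le> t \<Longrightarrow> t \<le> \<tau> \<Longrightarrow> iota_circ t = \<iota> t + measure (\<beta>s t) {\<tau><..}"
  using iota_circ_eq[of t] fin_meas_measure_Ioi[OF fin_meas_beta_s[of t], of \<tau>] by simp

lemma iota_circ_after_tau: "\<tau> \<le> t \<Longrightarrow> iota_circ t = \<iota> t + measure (\<beta>s t) UNIV - measure (\<beta>s \<tau>) {..\<tau>}"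
  using iota_circ_eq[of t] tau_pos by simp

lemma nonneg_nondec_cadlag_iota_circ: "nonneg_nondec_cadlag iota_circ"
proof -
  have i: "cadlag_fun \<iota>" "mono_on {0..} \<iota>" "\<And>t. t \<ge> 0 \<Longrightarrow> \<iota> t \<ge> 0"
    using nonneg_nondec_cadlag_iota unfolding nonneg_nondec_cadlag_def by auto
  have "cadlag_fun (\<lambda>t. \<iota> t + measure (\<beta>s t) UNIV - measure (beta_s_circ t) UNIV)"
    using cadlag_beta_s cadlag_beta_s_circ unfolding cadlag_M_up_def
    by (intro cadlag_fun_diff cadlag_fun_add i(1) cadlag_fun_total_mass) auto
  moreover have "\<iota> t + measure (\<beta>s t) UNIV - measure (beta_s_circ t) UNIV = iota_circ t" if "t \<ge> 0" for t
    using that iota_eq[OF that] fin_meas_measure_atLeast0[OF fin_meas_beta_s[OF that]]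
    by (simp add: iota_circ_def fin_meas_measure_atLeast0[OF fin_meas_beta_s_circ])
  ultimately have "cadlag_fun iota_circ" by (rule cadlag_fun_cong)
  moreover have mono_before: "iota_circ s \<le> iota_circ t" if st: "0 \<le> s" "s \<le> t" "t \<le> \<tau>" for s t
    using iota_circ_before_tau[of s] iota_circ_before_tau[of t] st mono_onD[OF i(2), of s t]
      cadlag_M_up_measure_mono(2)[OF cadlag_beta_s st(1,2), of \<tau>] by simp
  moreover have mono_after: "iota_circ s \<le> iota_circ t" if st: "\<tau> \<le> s" "s \<le> t" for s t
    using iota_circ_after_tau[of s] iota_circ_after_tau[of t] st tau_pos mono_onD[OF i(2), of s t]
      cadlag_M_up_total_mass_mono[OF cadlag_beta_s _ st(2)] by simp
  have "mono_on {0..} iota_circ"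
  proof (rule mono_onI)
    fix s t :: real assume st: "s \<in> {0..}" "t \<in> {0..}" "s \<le> t"
    consider "t \<le> \<tau>" | "\<tau> \<le> s" | "s \<le> \<tau>" "\<tau> \<le> t" by linarith
    then show "iota_circ s \<le> iota_circ t"
    proof cases
      case 3
      then show ?thesis using mono_before[of s \<tau>] mono_after[of \<tau> t] st by fastforce
    qed (use mono_before mono_after st in auto)
  qed
  moreover have "iota_circ t \<ge> 0" if t: "t \<ge> 0" for t
  proof -
    have "measure (\<beta>s (min t \<tau>)) {..\<tau>} \<le> measure (\<beta>s t) {..\<tau>}"
      using cadlag_M_up_measure_mono(1)[OF cadlag_beta_s, of "min t \<tau>" t \<tau>] t tau_pos by simp
    moreover have "measure (\<beta>s t) {..\<tau>} \<le> measure (\<beta>s t) UNIV"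
      by (rule fin_meas_measure_mono[OF fin_meas_beta_s[OF t]]) auto
    ultimately show ?thesis using iota_circ_eq[OF t] i(3)[OF t] by simp
  qed
  ultimately show ?thesis unfolding nonneg_nondec_cadlag_def by blast
qed

text \<open>By time \<open>t > y\<close> all work with deadline \<open>\<le> y\<close> has left, so \<open>\<rho>(\<tau>) - \<rho>(t)\<close> is at most
  \<open>\<alpha>\<^sub>\<tau>[0,\<tau>] - \<alpha>\<^sub>y[0,y]\<close>, which vanishes as \<open>y \<up> \<tau>\<close> because \<open>\<alpha>\<close> is weakly continuous and atomless.\<close>

lemma rho_increment_le_alpha_increment:
  assumes y: "0 \<le> y" "y < t" "t < \<tau>"
  shows "\<rho> \<tau> - \<rho> t \<le> measure (\<alpha> \<tau>) {0..\<tau>} - measure (\<alpha> y) {0..y}"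
proof -
  have t0: "t \<ge> 0" using y by simp
  have r2: "measure (\<beta>r t) {0..\<tau>} \<le> \<rho> t"
    using rho_eq_total[OF t0] fin_meas_measure_mono[OF fin_meas_beta_r[OF t0], of "{0..\<tau>}" "{0..}"] by simp
  have bs: "measure (\<beta>s t) {0..\<tau>} \<le> measure (\<beta>s \<tau>) {0..\<tau>}"
    using cadlag_M_up_measure_mono(1)[OF cadlag_beta_s t0, of \<tau> \<tau>] y
      fin_meas_measure_Iic[OF fin_meas_beta_s[OF t0], of \<tau>] fin_meas_measure_Iic[OF fin_meas_beta_s[OF tau_nonneg], of \<tau>]
    by simp
  have b1: "measure (\<beta> \<tau>) {0..\<tau>} \<le> measure (\<alpha> \<tau>) {0..\<tau>}"
    using xi_eq[OF tau_nonneg tau_nonneg] measure_nonneg[of "\<xi> \<tau>" "{0..\<tau>}"] by simp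
  have b2: "measure (\<beta> t) {0..y} \<le> measure (\<beta> t) {0..\<tau>}"
    by (rule fin_meas_measure_mono[OF fin_meas_beta[OF t0]]) (use y in auto)
  have "emeasure (\<xi> t) {0..y} \<le> emeasure (\<xi> t) {0..<t}"
    by (rule emeasure_mono) (use y fin_meas_xi[OF t0] in \<open>auto simp: fin_meas_sets\<close>)
  then have "measure (\<xi> t) {0..y} = 0" using xi_overdue[OF t0] by (simp add: measure_def)
  then have b3: "measure (\<beta> t) {0..y} = measure (\<alpha> t) {0..y}" using xi_eq[OF t0 y(1)] by simp
  have a1: "measure (\<alpha> y) {0..y} \<le> measure (\<alpha> t) {0..y}" by (rule alpha_mono) (use y in auto)
  show ?thesis
    using rho_eq[OF tau_nonneg] r2 measure_beta_split[OF tau_nonneg, of "{0..\<tau>}"]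
      measure_beta_split[OF t0, of "{0..\<tau>}"] bs b1 b2 b3 a1
    by simp
qed

lemma alpha_increment_small:
  assumes e: "e > 0"
  obtains y where "0 \<le> y" "y < \<tau>" "measure (\<alpha> \<tau>) {0..\<tau>} - measure (\<alpha> y) {0..y} < e"
proof -
  have e2: "e / 2 > 0" using e by simp
  obtain d where d: "d > 0" "measure (\<alpha> \<tau>) {\<tau>-d<..\<tau>+d} < e / 2"
    using fin_meas_small_Ioc[OF fin_meas_alpha[OF tau_nonneg] alpha_no_atom[OF tau_nonneg] e2] .
  have wt: "weak_tendsto \<alpha>h (\<alpha>h \<tau>) (at \<tau> within {0..})"
    using alpha_hat tau_nonneg unfolding cont_M_atomless_up_def by blast
  have "\<forall>\<^sub>F s in at \<tau> within {0..}. fin_meas (\<alpha>h s)"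
    unfolding eventually_at by (rule exI[of _ 1]) (auto intro: fin_meas_alpha_hat)
  then have "((\<lambda>s. measure (\<alpha>h s) UNIV) \<longlongrightarrow> measure (\<alpha>h \<tau>) UNIV) (at \<tau> within {0..})"
    by (rule weak_tendsto_total_mass[OF wt _ fin_meas_alpha_hat[OF tau_nonneg]])
  then have "\<forall>\<^sub>F s in at \<tau> within {0..}. dist (measure (\<alpha>h s) UNIV) (measure (\<alpha>h \<tau>) UNIV) < e / 2"
    using e2 by (rule tendstoD)
  then obtain d1 where d1: "d1 > 0"
    "\<And>s. s \<in> {0..} \<Longrightarrow> s \<noteq> \<tau> \<Longrightarrow> dist s \<tau> < d1 \<Longrightarrow> dist (measure (\<alpha>h s) UNIV) (measure (\<alpha>h \<tau>) UNIV) < e / 2"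
    unfolding eventually_at by blast
  define y where "y = max 0 (\<tau> - min d (d1 / 2))"
  have y: "0 \<le> y" "y < \<tau>" "\<tau> - d \<le> y" "dist y \<tau> < d1"
    using d d1(1) tau_pos unfolding y_def dist_real_def by (auto simp: abs_if)
  have "dist (measure (\<alpha>h y) UNIV) (measure (\<alpha>h \<tau>) UNIV) < e / 2"
    using d1(2)[of y] y by simp
  then have tot: "measure (\<alpha>h \<tau>) UNIV - measure (\<alpha>h y) UNIV < e / 2"
    unfolding dist_real_def by linarith
  have alpha_hat_up: "cadlag_M_up \<alpha>h" using alpha_hat unfolding cont_M_atomless_up_def by blast
  have "measure (\<alpha>h y) {y<..} \<le> measure (\<alpha>h \<tau>) {y<..}"
    using cadlag_M_up_measure_mono(2)[OF alpha_hat_up y(1), of \<tau> y] y by simp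
  then have c1: "measure (\<alpha>h \<tau>) {0..y} - measure (\<alpha>h y) {0..y} \<le> measure (\<alpha>h \<tau>) UNIV - measure (\<alpha>h y) UNIV"
    using fin_meas_measure_Ioi[OF fin_meas_alpha_hat[OF tau_nonneg], of y]
      fin_meas_measure_Ioi[OF fin_meas_alpha_hat[OF y(1)], of y]
      fin_meas_measure_Iic[OF fin_meas_alpha_hat[OF tau_nonneg] y(1)]
      fin_meas_measure_Iic[OF fin_meas_alpha_hat[OF y(1)] y(1)] by simp
  have c2: "measure (\<alpha> \<tau>) {0..y} - measure (\<alpha> y) {0..y} = measure (\<alpha>h \<tau>) {0..y} - measure (\<alpha>h y) {0..y}"
    using measure_alpha_split[OF tau_nonneg, of "{0..y}"] measure_alpha_split[OF y(1), of "{0..y}"] by simp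
  have c3: "measure (\<alpha> \<tau>) {0..\<tau>} = measure (\<alpha> \<tau>) {0..y} + measure (\<alpha> \<tau>) {y<..\<tau>}"
    using fin_meas_measure_Ioc[OF fin_meas_alpha[OF tau_nonneg] y(1), of \<tau>] y by simp
  have c4: "measure (\<alpha> \<tau>) {y<..\<tau>} \<le> measure (\<alpha> \<tau>) {\<tau>-d<..\<tau>+d}"
    by (rule fin_meas_measure_mono[OF fin_meas_alpha[OF tau_nonneg]]) (use y d in auto)
  show ?thesis using c1 c2 c3 c4 d(2) tot y(1,2) by (intro that[of y]) linarith+
qed

lemma rho_no_atom_at_tau: "emeasure (stieltjes \<rho>) {\<tau>} = 0"
proof -
  have "emeasure (stieltjes \<rho>) {\<tau>} \<le> 0 + ennreal e" if e: "e > 0" for e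
  proof -
    obtain y where y: "0 \<le> y" "y < \<tau>" "measure (\<alpha> \<tau>) {0..\<tau>} - measure (\<alpha> y) {0..y} < e"
      using alpha_increment_small[OF e] .
    define t where "t = (y + \<tau>) / 2"
    have t: "y < t" "t < \<tau>" "0 \<le> t" using y unfolding t_def by auto
    have "emeasure (stieltjes \<rho>) {\<tau>} \<le> emeasure (stieltjes \<rho>) {t<..\<tau>}"
      by (rule emeasure_mono) (use t in auto)
    also have "\<dots> = ennreal (ext_zero \<rho> \<tau> - ext_zero \<rho> t)"
      unfolding stieltjes_eq_interval_measure
      by (rule emeasure_interval_measure_Ioc[OF _ nonneg_nondec_cadlag_ext_zero_mono[OF nonneg_nondec_cadlag_rho]
            nonneg_nondec_cadlag_ext_zero_continuous[OF nonneg_nondec_cadlag_rho]]) (use t in simp)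
    also have "\<dots> \<le> ennreal e"
      using rho_increment_le_alpha_increment[OF y(1) t(1,2)] y(3) t tau_pos
      by (intro ennreal_leI) (simp add: ext_zero_def)
    finally show ?thesis by simp
  qed
  then have "emeasure (stieltjes \<rho>) {\<tau>} \<le> 0" by (rule ennreal_le_epsilon)
  then show ?thesis by simp
qed

lemma xi_measurable:
  assumes y: "y \<ge> 0"
  shows "(\<lambda>t. ennreal (measure (\<xi> t) {0..y}) * indicator {0..} t) \<in> borel_measurable borel"
proof (rule borel_measurable_mono_diff)
  show "mono_on {0..} (\<lambda>t. measure (\<alpha> t) {0..y})"
    by (rule mono_onI) (use alpha_mono in auto)
  show "mono_on {0..} (\<lambda>t. measure (\<beta> t) {0..y})"
  proof (rule mono_onI)
    fix s t :: real assume "s \<in> {0..}" "t \<in> {0..}" "s \<le> t"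
    then show "measure (\<beta> s) {0..y} \<le> measure (\<beta> t) {0..y}"
      using cadlag_M_up_measure_mono(1)[OF cadlag_beta, of s t y]
        fin_meas_measure_Iic[OF fin_meas_beta y, of s] fin_meas_measure_Iic[OF fin_meas_beta y, of t] by simp
  qed
qed (rule xi_eq[OF _ y])

lemma null_cover_xi:
  fixes F :: "real \<Rightarrow> real"
  assumes y: "y \<ge> 0" and I: "(\<integral>\<^sup>+ t\<in>{0..}. ennreal (measure (\<xi> t) {0..y}) \<partial>stieltjes F) = 0"
  obtains N where "N \<in> sets borel" "emeasure (stieltjes F) N = 0"
    "\<And>t. t \<ge> 0 \<Longrightarrow> measure (\<xi> t) {0..y} > 0 \<Longrightarrow> t \<in> N"
  using nn_integral_zero_null_cover[OF I sets_stieltjes xi_measurable[OF y]] by blast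

lemma xi_circ_positive_before_tau:
  assumes t: "t \<ge> 0" "measure (xi_circ t) {0..x} \<noteq> 0"
  shows "t < \<tau>" "measure (\<xi> t) {0..min x \<tau>} > 0"
proof -
  show "t < \<tau>" using measure_xi_circ_after_tau[of t x] t(2) by (cases "t < \<tau>") auto
  then have "measure (\<xi> t) {0..min x \<tau>} \<noteq> 0" using measure_xi_circ[OF t(1), of x] t(2) by simp
  then show "measure (\<xi> t) {0..min x \<tau>} > 0"
    using measure_nonneg[of "\<xi> t" "{0..min x \<tau>}"] by linarith
qed

lemma emeasure_stieltjes_iota_circ:
  assumes N: "N \<in> sets borel" "N \<subseteq> {..\<tau>}"
  shows "emeasure (stieltjes iota_circ) N
    = emeasure (stieltjes \<iota>) N + emeasure (stieltjes (\<lambda>s. measure (\<beta> s) {\<tau><..})) N"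
proof -
  let ?B = "\<lambda>s. measure (\<beta>s (min s \<tau>)) {\<tau><..}"
  let ?P = "\<lambda>s. measure (\<beta> s) {\<tau><..}"
  have cadlag_B: "cadlag_M_up (\<lambda>t. \<beta>s (min t \<tau>))" by (rule cadlag_M_up_stopped[OF cadlag_beta_s tau_nonneg])
  note Bm = cadlag_M_up_ext_zero_measure_Ioi_mono[OF cadlag_B]
    and Br = cadlag_M_up_ext_zero_measure_Ioi_continuous[OF cadlag_B]
    and Im = nonneg_nondec_cadlag_ext_zero_mono[OF nonneg_nondec_cadlag_iota]
    and Ir = nonneg_nondec_cadlag_ext_zero_continuous[OF nonneg_nondec_cadlag_iota]
  have "emeasure (stieltjes iota_circ) N = emeasure (interval_measure (\<lambda>x. ext_zero \<iota> x + ext_zero ?B x)) N"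
    unfolding stieltjes_eq_interval_measure
  proof (rule emeasure_interval_measure_eq_below[OF nonneg_nondec_cadlag_ext_zero_mono[OF nonneg_nondec_cadlag_iota_circ]
        nonneg_nondec_cadlag_ext_zero_continuous[OF nonneg_nondec_cadlag_iota_circ] _ _ _ N])
    show "ext_zero iota_circ s = ext_zero \<iota> s + ext_zero ?B s" if "s \<le> \<tau>" for s
      using iota_circ_before_tau[of s] that by (simp add: ext_zero_def)
  qed (use Im Ir Bm Br in \<open>auto intro: add_mono continuous_add\<close>)
  also have "\<dots> = emeasure (stieltjes \<iota>) N + emeasure (interval_measure (ext_zero ?B)) N"
    unfolding stieltjes_eq_interval_measure by (rule emeasure_interval_measure_add[OF Im Ir Bm Br N(1)])
  also have "emeasure (interval_measure (ext_zero ?B)) N = emeasure (stieltjes ?P) N"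
    unfolding stieltjes_eq_interval_measure
  proof (rule emeasure_interval_measure_eq_below[OF Bm Br cadlag_M_up_ext_zero_measure_Ioi_mono[OF cadlag_beta]
        cadlag_M_up_ext_zero_measure_Ioi_continuous[OF cadlag_beta] _ N])
    fix s :: real assume s: "s \<le> \<tau>"
    show "ext_zero ?B s = ext_zero ?P s"
    proof (cases "s < 0")
      case False
      then have s0: "0 \<le> s" by simp
      have "measure (\<beta>r s) {\<tau><..} = 0"
        using measure_beta_r_above_tau[OF s0 s, of UNIV] by (simp add: measure_def)
      then show ?thesis using measure_beta_split[OF s0, of "{\<tau><..}"] s False by (simp add: ext_zero_def)
    qed (simp add: ext_zero_def)
  qed
  finally show ?thesis .
qed

text \<open>The queue with deadlines \<open>\<le> \<tau>\<close> is charged neither by \<open>d\<iota>\<close> (non-idling) nor by \<open>d\<beta>(\<tau>, \<infinity>)\<close>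
  (the EDF condition at level \<open>\<tau>\<close>).\<close>

lemma xi_circ_non_idling:
  assumes x: "x \<ge> 0"
  shows "(\<integral>\<^sup>+ t\<in>{0..}. ennreal (measure (xi_circ t) {0..x}) \<partial>stieltjes iota_circ) = 0"
proof -
  let ?y = "min x \<tau>"
  have y: "?y \<ge> 0" "?y \<le> \<tau>" using x tau_pos by auto
  obtain N1 where N1: "N1 \<in> sets borel" "emeasure (stieltjes \<iota>) N1 = 0"
    "\<And>t. t \<ge> 0 \<Longrightarrow> measure (\<xi> t) {0..?y} > 0 \<Longrightarrow> t \<in> N1"
    using null_cover_xi[OF y(1) non_idling[OF y(1)]] by blast
  obtain N2 where N2: "N2 \<in> sets borel" "emeasure (stieltjes (\<lambda>s. measure (\<beta> s) {\<tau><..})) N2 = 0"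
    "\<And>t. t \<ge> 0 \<Longrightarrow> measure (\<xi> t) {0..\<tau>} > 0 \<Longrightarrow> t \<in> N2"
    using null_cover_xi[OF tau_nonneg edf[OF tau_nonneg]] by blast
  define N where "N = N1 \<inter> N2 \<inter> {..\<tau>}"
  have N: "N \<in> sets borel" "N \<subseteq> {..\<tau>}" using N1(1) N2(1) unfolding N_def by auto
  have covered: "t \<in> N" if t: "t \<ge> 0" "measure (xi_circ t) {0..x} \<noteq> 0" for t
  proof -
    note pos = xi_circ_positive_before_tau[OF t]
    have "measure (\<xi> t) {0..?y} \<le> measure (\<xi> t) {0..\<tau>}"
      by (rule fin_meas_measure_mono[OF fin_meas_xi[OF t(1)]]) (use y in auto)
    then show ?thesis unfolding N_def using N1(3)[OF t(1) pos(2)] N2(3)[OF t(1)] pos by simp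
  qed
  have "emeasure (stieltjes \<iota>) N = 0"
    using emeasure_mono[of N N1 "stieltjes \<iota>"] N1(1,2) by (auto simp: N_def)
  moreover have "emeasure (stieltjes (\<lambda>s. measure (\<beta> s) {\<tau><..})) N = 0"
    using emeasure_mono[of N N2 "stieltjes (\<lambda>s. measure (\<beta> s) {\<tau><..})"] N2(1,2) by (auto simp: N_def)
  ultimately have "emeasure (stieltjes iota_circ) N = 0"
    by (simp add: emeasure_stieltjes_iota_circ[OF N])
  then show ?thesis by (rule nn_integral_zero_if_null_cover[OF N(1) _ sets_stieltjes covered])
qed

lemma emeasure_stieltjes_beta_circ_Ioi_le:
  assumes x: "x < \<tau>" and N: "N \<in> sets borel" "N \<subseteq> {..\<tau>}"
  shows "emeasure (stieltjes (\<lambda>s. measure (beta_circ s) {x<..})) N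
    \<le> emeasure (stieltjes (\<lambda>s. measure (\<beta> s) {x<..})) N"
proof -
  let ?K = "\<lambda>s. measure (beta_circ s) {x<..}"
  let ?B = "\<lambda>s. measure (\<beta> (min s \<tau>)) {\<tau><..}"
  let ?P = "\<lambda>s. measure (\<beta> s) {x<..}"
  have cadlag_B: "cadlag_M_up (\<lambda>t. \<beta> (min t \<tau>))" by (rule cadlag_M_up_stopped[OF cadlag_beta tau_nonneg])
  note Km = cadlag_M_up_ext_zero_measure_Ioi_mono[OF cadlag_beta_circ]
    and Kr = cadlag_M_up_ext_zero_measure_Ioi_continuous[OF cadlag_beta_circ]
    and Bm = cadlag_M_up_ext_zero_measure_Ioi_mono[OF cadlag_B]
    and Br = cadlag_M_up_ext_zero_measure_Ioi_continuous[OF cadlag_B]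
  have "emeasure (stieltjes ?K) N \<le> emeasure (stieltjes ?K) N + emeasure (interval_measure (ext_zero ?B)) N"
    by simp
  also have "\<dots> = emeasure (interval_measure (\<lambda>x. ext_zero ?K x + ext_zero ?B x)) N"
    unfolding stieltjes_eq_interval_measure by (rule emeasure_interval_measure_add[OF Km Kr Bm Br N(1), symmetric])
  also have "\<dots> = emeasure (stieltjes ?P) N"
    unfolding stieltjes_eq_interval_measure
  proof (rule emeasure_interval_measure_eq_below[OF _ _ cadlag_M_up_ext_zero_measure_Ioi_mono[OF cadlag_beta]
        cadlag_M_up_ext_zero_measure_Ioi_continuous[OF cadlag_beta] _ N])
    fix s :: real assume s: "s \<le> \<tau>"
    show "ext_zero ?K s + ext_zero ?B s = ext_zero ?P s"
    proof (cases "s < 0")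
      case False
      then have s0: "s \<ge> 0" by simp
      have "?K s = measure (\<beta> s) ({..\<tau>} \<inter> {x<..})"
        unfolding beta_circ_def using s measure_restrict_atMost[OF fin_meas_beta[OF s0]] by simp
      moreover have "measure (\<beta> s) (({..\<tau>} \<inter> {x<..}) \<union> {\<tau><..})
          = measure (\<beta> s) ({..\<tau>} \<inter> {x<..}) + measure (\<beta> s) {\<tau><..}"
        by (rule fin_meas_measure_Un[OF fin_meas_beta[OF s0]]) (simp_all add: disjoint_iff)
      moreover have "({..\<tau>} \<inter> {x<..}) \<union> {\<tau><..} = {x<..}" using x by auto
      ultimately show ?thesis using s False by (simp add: ext_zero_def)
    qed (simp add: ext_zero_def)
  qed (use Km Kr Bm Br in \<open>auto intro: add_mono continuous_add\<close>)
  finally show ?thesis .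
qed

lemma xi_circ_edf:
  assumes x: "x \<ge> 0"
  shows "(\<integral>\<^sup>+ t\<in>{0..}. ennreal (measure (xi_circ t) {0..x}) \<partial>stieltjes (\<lambda>s. measure (beta_circ s) {x<..})) = 0"
proof (cases "x < \<tau>")
  case False
  have "ext_zero (\<lambda>s. measure (beta_circ s) {x<..}) = (\<lambda>_. 0)"
  proof
    fix s :: real
    have "measure (beta_circ s) {x<..} = measure (\<beta> (min s \<tau>)) ({..\<tau>} \<inter> {x<..})" if "s \<ge> 0"
      unfolding beta_circ_def by (rule measure_restrict_atMost) (use fin_meas_beta[of "min s \<tau>"] that tau_pos in auto)
    moreover have "{..\<tau>} \<inter> {x<..} = {}" using False by auto
    ultimately show "ext_zero (\<lambda>s. measure (beta_circ s) {x<..}) s = 0" by (simp add: ext_zero_def)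
  qed
  then have "emeasure (stieltjes (\<lambda>s. measure (beta_circ s) {x<..})) UNIV = 0"
    unfolding stieltjes_eq_interval_measure by (simp add: emeasure_interval_measure_const)
  then show ?thesis by (intro nn_integral_zero_if_null_cover[of UNIV]) auto
next
  case True
  obtain N3 where N3: "N3 \<in> sets borel" "emeasure (stieltjes (\<lambda>s. measure (\<beta> s) {x<..})) N3 = 0"
    "\<And>t. t \<ge> 0 \<Longrightarrow> measure (\<xi> t) {0..x} > 0 \<Longrightarrow> t \<in> N3"
    using null_cover_xi[OF x edf[OF x]] by blast
  define N where "N = N3 \<inter> {..\<tau>}"
  have N: "N \<in> sets borel" "N \<subseteq> {..\<tau>}" using N3(1) unfolding N_def by auto
  have covered: "t \<in> N" if t: "t \<ge> 0" "measure (xi_circ t) {0..x} \<noteq> 0" for t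
    using N3(3)[OF t(1)] xi_circ_positive_before_tau[OF t] True unfolding N_def by simp
  have "emeasure (stieltjes (\<lambda>s. measure (beta_circ s) {x<..})) N
      \<le> emeasure (stieltjes (\<lambda>s. measure (\<beta> s) {x<..})) N"
    by (rule emeasure_stieltjes_beta_circ_Ioi_le[OF True N])
  also have "\<dots> \<le> emeasure (stieltjes (\<lambda>s. measure (\<beta> s) {x<..})) N3"
    by (rule emeasure_mono) (use N3(1) in \<open>auto simp: N_def\<close>)
  finally have "emeasure (stieltjes (\<lambda>s. measure (beta_circ s) {x<..})) N = 0" using N3(2) by simp
  then show ?thesis by (rule nn_integral_zero_if_null_cover[OF N(1) _ sets_stieltjes covered])
qed

lemma emeasure_stieltjes_rho_circ:
  "A \<in> sets borel \<Longrightarrow> A \<subseteq> {..\<tau>} \<Longrightarrow> emeasure (stieltjes rho_circ) A = emeasure (stieltjes \<rho>) A"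
  unfolding stieltjes_eq_interval_measure
  by (rule emeasure_interval_measure_eq_below[OF
        nonneg_nondec_cadlag_ext_zero_mono[OF nonneg_nondec_cadlag_rho_circ]
        nonneg_nondec_cadlag_ext_zero_continuous[OF nonneg_nondec_cadlag_rho_circ]
        nonneg_nondec_cadlag_ext_zero_mono[OF nonneg_nondec_cadlag_rho]
        nonneg_nondec_cadlag_ext_zero_continuous[OF nonneg_nondec_cadlag_rho]])
    (auto simp: ext_zero_def rho_circ_def)

lemma rho_circ_null_after_tau: "emeasure (stieltjes rho_circ) {\<tau>..} = 0"
proof -
  note Rm = nonneg_nondec_cadlag_ext_zero_mono[OF nonneg_nondec_cadlag_rho_circ]
    and Rr = nonneg_nondec_cadlag_ext_zero_continuous[OF nonneg_nondec_cadlag_rho_circ]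
  have "emeasure (stieltjes rho_circ) {\<tau>} = emeasure (stieltjes \<rho>) {\<tau>}"
    by (rule emeasure_stieltjes_rho_circ) auto
  then have "{\<tau>} \<in> null_sets (stieltjes rho_circ)"
    using rho_no_atom_at_tau by (auto intro: null_setsI)
  moreover have "{\<tau><..\<tau> + real n} \<in> null_sets (stieltjes rho_circ)" for n :: nat
  proof -
    have "emeasure (stieltjes rho_circ) {\<tau><..\<tau> + real n} = ennreal (ext_zero rho_circ (\<tau> + real n) - ext_zero rho_circ \<tau>)"
      unfolding stieltjes_eq_interval_measure by (rule emeasure_interval_measure_Ioc[OF _ Rm Rr]) simp
    also have "ext_zero rho_circ (\<tau> + real n) - ext_zero rho_circ \<tau> = 0"
      using tau_pos by (simp add: ext_zero_def rho_circ_def)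
    finally show ?thesis by (intro null_setsI) simp_all
  qed
  moreover have "{\<tau>..} = {\<tau>} \<union> (\<Union>n::nat. {\<tau><..\<tau> + real n})"
  proof (intro equalityI subsetI)
    fix z assume z: "z \<in> {\<tau>..}"
    obtain n :: nat where "z - \<tau> \<le> real n" using real_arch_simple by blast
    then have "z = \<tau> \<or> z \<in> {\<tau><..\<tau> + real n}" using z by auto
    then show "z \<in> {\<tau>} \<union> (\<Union>n::nat. {\<tau><..\<tau> + real n})" by blast
  qed auto
  ultimately have "{\<tau>..} \<in> null_sets (stieltjes rho_circ)" by (metis null_sets.Un null_sets_UN)
  then show ?thesis by (rule null_setsD1)
qed

lemma inf_supp_xi_circ_late:
  assumes t: "0 \<le> t" "t < \<tau>" and late: "inf_supp (xi_circ t) > ereal t"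
  shows "inf_supp (\<xi> t) > ereal t"
proof (rule ccontr)
  assume "\<not> inf_supp (\<xi> t) > ereal t"
  then have le: "inf_supp (\<xi> t) \<le> ereal t" by simp
  then have "inf_supp (\<xi> t) < ereal \<tau>" using t(2) by (simp add: le_less_trans)
  then have "inf_supp (xi_circ t) \<le> inf_supp (\<xi> t)"
    using inf_supp_restrict_atMost[OF fin_meas_xi[OF t(1)]] t(2) by (simp add: xi_circ_def)
  then show False using le late by simp
qed

text \<open>From \<open>\<tau>\<close> on, \<open>\<rho>\<^sup>\<circ>\<close> is flat and has no atom at \<open>\<tau>\<close>, so only \<open>[0, \<tau>)\<close> matters.\<close>

lemma rho_circ_only_late:
  "(\<integral>\<^sup>+ t\<in>{0..}. (if inf_supp (xi_circ t) > ereal t then 1 else 0) \<partial>stieltjes rho_circ) = 0"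
proof -
  let ?f = "\<lambda>t. (if inf_supp (xi_circ t) > ereal t then 1 else 0) * indicator {0..} t :: ennreal"
  let ?g = "\<lambda>t. (if inf_supp (\<xi> t) > ereal t then 1 else 0) * indicator {0..} t :: ennreal"
  let ?R = "{..<\<tau>}"
  have R: "?R \<inter> space (stieltjes F) \<in> sets (stieltjes F)" for F by simp
  have "AE t in stieltjes rho_circ. t \<in> ?R"
    by (rule AE_I'[of "{\<tau>..}"]) (use rho_circ_null_after_tau in \<open>auto intro: null_setsI\<close>)
  then have "(\<integral>\<^sup>+ t. ?f t \<partial>stieltjes rho_circ) = (\<integral>\<^sup>+ t. ?f t * indicator ?R t \<partial>stieltjes rho_circ)"
    by (intro nn_integral_cong_AE) (auto elim!: eventually_mono)
  also have "\<dots> = (\<integral>\<^sup>+ t. ?f t \<partial>restrict_space (stieltjes rho_circ) ?R)"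
    by (rule nn_integral_restrict_space[OF R, symmetric])
  also have "restrict_space (stieltjes rho_circ) ?R = restrict_space (stieltjes \<rho>) ?R"
  proof (rule measure_eqI)
    fix A assume "A \<in> sets (restrict_space (stieltjes rho_circ) ?R)"
    then have A: "A \<subseteq> ?R" "A \<in> sets borel"
      using sets_restrict_space_iff[OF R] by auto
    have "emeasure (stieltjes rho_circ) A = emeasure (stieltjes \<rho>) A"
      using A by (intro emeasure_stieltjes_rho_circ) auto
    then show "emeasure (restrict_space (stieltjes rho_circ) ?R) A = emeasure (restrict_space (stieltjes \<rho>) ?R) A"
      using A by (simp add: emeasure_restrict_space)
  qed (simp add: sets_restrict_space)
  also have "(\<integral>\<^sup>+ t. ?f t \<partial>restrict_space (stieltjes \<rho>) ?R) = (\<integral>\<^sup>+ t. ?f t * indicator ?R t \<partial>stieltjes \<rho>)"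
    by (rule nn_integral_restrict_space[OF R])
  also have "\<dots> \<le> (\<integral>\<^sup>+ t. ?g t \<partial>stieltjes \<rho>)"
    using inf_supp_xi_circ_late by (intro nn_integral_mono) (auto simp: indicator_def)
  also have "\<dots> = 0" using rho_only_late by simp
  finally show ?thesis by simp
qed

lemma truncated_solution: "hard_EDF_solution (truncate_data \<alpha> \<tau>) \<mu> xi_circ beta_circ beta_s_circ beta_r_circ rho_circ iota_circ"
  by unfold_locales
    (assumption | simp add: iota_circ_def | rule cadlag_xi_circ cadlag_beta_circ cadlag_beta_s_circ
      cadlag_beta_r_circ nonneg_nondec_cadlag_rho_circ nonneg_nondec_cadlag_iota_circ beta_circ_split beta_r_circ_future xi_circ_eq
      xi_circ_non_idling xi_circ_edf rho_circ_eq rho_circ_eq_total xi_circ_overdue rho_circ_only_late)+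

end

lemma deadline_truncation_exists:
  assumes "data_assumption \<alpha> \<mu>" "\<tau> > 0" "hard_EDF_solution \<alpha> \<mu> \<xi> \<beta> \<beta>s \<beta>r \<rho> \<iota>"
  shows "\<exists>\<xi>0 \<alpha>h a. deadline_truncation \<alpha> \<mu> \<xi> \<beta> \<beta>s \<beta>r \<rho> \<iota> \<tau> \<xi>0 \<alpha>h a"
proof -
  obtain \<xi>0 \<alpha>h a where data: "atomless_meas \<xi>0" "cont_M_atomless_up \<alpha>h"
    "\<forall>t\<ge>0. sets (\<alpha> t) = sets borel"
    "\<forall>t\<ge>0. \<forall>B\<in>sets borel. emeasure (\<alpha> t) B = emeasure \<xi>0 B + emeasure (\<alpha>h t) B"
    "\<forall>t\<ge>0. \<forall>B\<in>sets borel. emeasure (\<alpha>h t) B = (\<integral>\<^sup>+ s\<in>{0..t}. emeasure (a s) B \<partial>lborel)"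
    "\<forall>t\<ge>0. fin_meas (a t) \<and> emeasure (a t) {..<t} = 0"
    using assms(1) unfolding data_assumption_def by (elim conjE exE) (rule that)
  have "deadline_truncation \<alpha> \<mu> \<xi> \<beta> \<beta>s \<beta>r \<rho> \<iota> \<tau> \<xi>0 \<alpha>h a"
    using assms(3) by (rule deadline_truncation.intro) (unfold_locales, simp_all add: assms(2) data)
  then show ?thesis by blast
qed

theorem lemma3p5:
  fixes \<alpha> :: "real \<Rightarrow> real measure" and \<mu> :: "real \<Rightarrow> real" and \<tau> :: real
    and \<xi> \<beta> \<beta>s \<beta>r \<xi>c \<beta>c \<beta>sc \<beta>rc :: "real \<Rightarrow> real measure"
    and \<rho> \<iota> \<rho>c \<iota>c :: "real \<Rightarrow> real"
  assumes "data_assumption \<alpha> \<mu>"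
    and "\<tau> > 0"
    and "unique_hard_EDF_solution (truncate_data \<alpha> \<tau>) \<mu> \<xi>c \<beta>c \<beta>sc \<beta>rc \<rho>c \<iota>c"
    and "unique_hard_EDF_solution \<alpha> \<mu> \<xi> \<beta> \<beta>s \<beta>r \<rho> \<iota>"
  shows "\<forall>x\<in>{0..\<tau>}. \<forall>t\<in>{0..\<tau>}.
           \<rho> t = \<rho>c t
         \<and> measure (\<beta>r t) {0..x} = measure (\<beta>rc t) {0..x}
         \<and> measure (\<beta>s t) {0..x} = measure (\<beta>sc t) {0..x}
         \<and> measure (\<xi> t) {0..x} = measure (\<xi>c t) {0..x}"
proof -
  have "hard_EDF_solution \<alpha> \<mu> \<xi> \<beta> \<beta>s \<beta>r \<rho> \<iota>"
    using assms(4) by (simp add: unique_hard_EDF_solution_def hard_EDF_FME_iff_solution)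
  then obtain \<xi>0 \<alpha>h a where "deadline_truncation \<alpha> \<mu> \<xi> \<beta> \<beta>s \<beta>r \<rho> \<iota> \<tau> \<xi>0 \<alpha>h a"
    using deadline_truncation_exists[OF assms(1,2)] by blast
  then interpret deadline_truncation \<alpha> \<mu> \<xi> \<beta> \<beta>s \<beta>r \<rho> \<iota> \<tau> \<xi>0 \<alpha>h a .
  have circ: "xi_circ t = \<xi>c t" "beta_s_circ t = \<beta>sc t" "beta_r_circ t = \<beta>rc t" "rho_circ t = \<rho>c t"
    if "t \<ge> 0" for t
    using assms(3) truncated_solution that
    unfolding unique_hard_EDF_solution_def hard_EDF_FME_iff_solution by simp_all
  show ?thesis
  proof (intro ballI)
    fix x t assume "x \<in> {0..\<tau>}" "t \<in> {0..\<tau>}"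
    then have t: "t \<ge> 0" "min t \<tau> = t" and x: "min x \<tau> = x" by auto
    show "\<rho> t = \<rho>c t \<and> measure (\<beta>r t) {0..x} = measure (\<beta>rc t) {0..x}
      \<and> measure (\<beta>s t) {0..x} = measure (\<beta>sc t) {0..x} \<and> measure (\<xi> t) {0..x} = measure (\<xi>c t) {0..x}"
      using circ[OF t(1)] measure_xi_circ[OF t(1), of x] measure_beta_s_circ[OF t(1), of x] t x
      by (simp add: rho_circ_def beta_r_circ_def)
  qed
qed

end
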